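(* For all $x>0$ and $\nu>0$, \begin{align*} \left.\frac{\partial\,\mathrm{ber}_{\mu}(x)}{\partial\mu}\right|_{\mu=-\nu} &=-\mathrm{Re}\left[e^{-i\pi\nu/2}\left\{\left(e^{-i\pi\nu}+\cos\pi\nu\right)K_{\nu}\left(e^{i\pi/4}x\right)+\frac{2}{\pi}\sin\pi\nu\,\frac{\partial K_{\nu}}{\partial\nu}\left(e^{i\pi/4}x\right)\right\}+\frac{\partial J_{\nu}}{\partial\nu}\left(e^{-i\pi/4}x\right)\right],\\ \left.\frac{\partial\,\mathrm{bei}_{\mu}(x)}{\partial\mu}\right|_{\mu=-\nu} &=-\mathrm{Im}\left[e^{-i\pi\nu/2}\left\{\left(e^{-i\pi\nu}+\cos\pi\nu\right)K_{\nu}\left(e^{i\pi/4}x\right)+\frac{2}{\pi}\sin\pi\nu\,\frac{\partial K_{\nu}}{\partial\nu}\left(e^{i\pi/4}x\right)\right\}+\frac{\partial J_{\nu}}{\partial\nu}\left(e^{-i\pi/4}x\right)\right]. \end{align*}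
   Context: $J_\nu$ is the Bessel function of the first kind and $K_\nu$ the Macdonald function (modified Bessel function of the second kind), with principal branches. For real $\nu$ and $x\ge0$ the Kelvin functions are defined by $\mathrm{ber}_{\nu}(x)+i\,\mathrm{bei}_{\nu}(x)=e^{i\pi\nu}J_{\nu}(e^{-i\pi/4}x)$ and $\mathrm{ker}_{\nu}(x)+i\,\mathrm{kei}_{\nu}(x)=e^{-i\pi\nu/2}K_{\nu}(e^{i\pi/4}x)$, with all four functions real-valued. The notation $\frac{\partial J_{\nu}}{\partial\nu}(z)$ means $\frac{\partial}{\partial\mu}J_\mu(z)\big|_{\mu=\nu}$, similarly for $K_\nu$. (The paper writes the left-hand sides as $\partial\,\mathrm{ber}_{-\nu}(x)/\partial\nu$ and $\partial\,\mathrm{bei}_{-\nu}(x)/\partial\nu$, meaning the order derivative evaluated at order $-\nu$.) *)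

theory Defs
  imports "HOL-Analysis.Analysis"
begin

(* Bessel function of the first kind, principal branch, real order nu, complex argument:
   J_nu(z) = sum_k (-1)^k (z/2)^(2k+nu) / (k! Gamma(k+nu+1)),
   with (z/2)^nu = exp(nu Ln(z/2)) (principal) and 1/Gamma = rGamma (entire). *)
definition besselJ :: "real \<Rightarrow> complex \<Rightarrow> complex" where
  "besselJ \<nu> z = (\<Sum>k. (-1) ^ k * (z / 2) powr (of_real \<nu>) * (z / 2) ^ (2 * k)
                        * rGamma (of_real (real k + \<nu> + 1)) / of_nat (fact k))"

(* Macdonald function K_nu(z) for Re z > 0 (which covers every use below), via the
   standard integral representation K_nu(z) = int_0^infty exp(-z cosh t) cosh(nu t) dt. *)
definition besselK :: "real \<Rightarrow> complex \<Rightarrow> complex" where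
  "besselK \<nu> z = integral {0..} (\<lambda>t::real. exp (- z * of_real (cosh t)) * of_real (cosh (\<nu> * t)))"

definition besselJ_dorder :: "real \<Rightarrow> complex \<Rightarrow> complex" where
  "besselJ_dorder \<nu> z = vector_derivative (\<lambda>\<mu>. besselJ \<mu> z) (at \<nu>)"

definition besselK_dorder :: "real \<Rightarrow> complex \<Rightarrow> complex" where
  "besselK_dorder \<nu> z = vector_derivative (\<lambda>\<mu>. besselK \<mu> z) (at \<nu>)"

definition ber :: "real \<Rightarrow> real \<Rightarrow> real" where
  "ber \<nu> x = Re (exp (\<i> * of_real (pi * \<nu>)) * besselJ \<nu> (exp (- \<i> * of_real (pi / 4)) * of_real x))"

definition bei :: "real \<Rightarrow> real \<Rightarrow> real" where
  "bei \<nu> x = Im (exp (\<i> * of_real (pi * \<nu>)) * besselJ \<nu> (exp (- \<i> * of_real (pi / 4)) * of_real x))"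

end

(*
  The heart of the matter is the connection formula
    sin (nu pi) K_nu(w) = (pi/2) (I_(-nu)(w) - I_nu(w))      (Re w > 0)
  between the integral K_nu(w) = int_0^inf exp(-w cosh t) cosh(nu t) dt and the modified Bessel
  function I_nu(w) = (w/2)^nu sum_k (w/2)^(2k) / (k! Gamma(k + nu + 1)).  For 0 < nu < 1, the pairs
  (K_nu, -K_(nu-1)), (I_nu, I_(nu-1)) and (I_(-nu), I_(1-nu)) solve one first-order system, so their
  Wronskians are constant; the constants are found by letting w -> 0+ along the reals, using
  (x/2)^nu K_nu(x) -> Gamma(nu)/2 and Gamma(nu) Gamma(1-nu) = pi / sin(nu pi), and eliminating
  K_(nu-1) from them gives the formula.  Both sides are odd in nu and satisfy the same three-term
  recurrence, which extends it to all real nu.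

  As I_nu(e^(i pi/4) x) = e^(i pi nu/2) J_nu(e^(-i pi/4) x), the formula says
    ber_mu x + i bei_mu x = J_(-mu)(e^(-i pi/4) x) - (2/pi) sin(mu pi) e^(i pi mu/2) K_mu(e^(i pi/4) x),
  and the theorem is the derivative of the right-hand side at mu = -nu, where K_mu is even in mu.
  The series for J and the integral for K are holomorphic in the order, so the derivatives exist.
*)

theory Submission
  imports Defs "HOL-Complex_Analysis.Complex_Analysis" "HOL-Real_Asymp.Real_Asymp"
begin

section \<open>Bessel functions of the first kind\<close>

lemma norm_pochhammer_ge_1:
  fixes z :: complex
  assumes "1 \<le> Re z"
  shows "1 \<le> norm (pochhammer z n)"
proof -
  have "1 \<le> norm (z + of_nat i)" for i
    using assms complex_Re_le_cmod[of "z + of_nat i"] by simp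
  then have "1 \<le> (\<Prod>i<n. norm (z + of_nat i))"
    by (intro prod_ge_1) auto
  then show ?thesis
    by (simp add: pochhammer_prod prod_norm atLeast0LessThan)
qed

text \<open>Near a compact set of orders, the shifts \<open>rGamma (k + m + 1)\<close> are uniformly bounded:
  finitely many shifts are handled by continuity, and the functional equation
  \<open>rGamma z = pochhammer z j * rGamma (z + j)\<close> with \<open>Re z \<ge> 1\<close> makes the remaining ones smaller.\<close>
lemma rGamma_shifts_bounded:
  fixes K :: "complex set"
  assumes "compact K"
  obtains M where "\<And>m k. m \<in> K \<Longrightarrow> norm (rGamma (of_nat k + m + 1)) \<le> M"
proof -
  obtain B where B: "\<And>m. m \<in> K \<Longrightarrow> norm m \<le> B"
    using compact_imp_bounded[OF assms] bounded_iff by blast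
  define N where "N = nat \<lceil>B\<rceil>"
  define K' where "K' = (\<Union>j\<le>N. (\<lambda>m. of_nat j + m + 1) ` K)"
  have "compact (rGamma ` K')"
    unfolding K'_def
    by (intro compact_continuous_image compact_UN finite_atMost continuous_intros assms)
  then obtain M where M: "\<And>z. z \<in> K' \<Longrightarrow> norm (rGamma z) \<le> M"
    using compact_imp_bounded bounded_iff by (metis image_eqI)
  have "norm (rGamma (of_nat k + m + 1)) \<le> M" if m: "m \<in> K" for m k
  proof (cases "k \<le> N")
    case True
    then show ?thesis using M m unfolding K'_def by auto
  next
    case False
    define z where "z = of_nat N + m + 1"
    have "- Re m \<le> B"
      using abs_Re_le_cmod[of m] B[OF m] by linarith
    moreover have "B \<le> real N" unfolding N_def by linarith
    ultimately have "1 \<le> Re z" unfolding z_def by simp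
    have "z + of_nat (k - N) = of_nat k + m + 1"
      using False unfolding z_def by (simp add: of_nat_diff)
    then have z: "rGamma z = pochhammer z (k - N) * rGamma (of_nat k + m + 1)"
      using pochhammer_rGamma[of z "k - N"] by simp
    have "norm (rGamma (of_nat k + m + 1))
        \<le> norm (pochhammer z (k - N)) * norm (rGamma (of_nat k + m + 1))"
      using norm_pochhammer_ge_1[OF \<open>1 \<le> Re z\<close>] by (simp add: mult_le_cancel_right1)
    also have "\<dots> = norm (rGamma z)"
      by (simp add: z norm_mult)
    also have "\<dots> \<le> M" using M m unfolding K'_def z_def by auto
    finally show ?thesis .
  qed
  then show ?thesis using that by blast
qed

definition bessel_coeff :: "complex \<Rightarrow> nat \<Rightarrow> complex" where
  "bessel_coeff m k = rGamma (of_nat k + m + 1) / fact k"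

definition bessel_series :: "complex \<Rightarrow> complex \<Rightarrow> complex" where
  "bessel_series m y = (\<Sum>k. bessel_coeff m k * y ^ k)"

lemma bessel_coeff_bound:
  fixes K :: "complex set"
  assumes "compact K"
  obtains M where "\<And>m k y. m \<in> K \<Longrightarrow> norm (bessel_coeff m k * y ^ k) \<le> M * (norm y ^ k / fact k)"
proof -
  obtain M where "\<And>m k. m \<in> K \<Longrightarrow> norm (rGamma (of_nat k + m + 1)) \<le> M"
    using rGamma_shifts_bounded[OF assms] by blast
  then have "norm (bessel_coeff m k * y ^ k) \<le> M * (norm y ^ k / fact k)" if "m \<in> K" for m k y
    using that by (simp add: bessel_coeff_def norm_mult norm_divide norm_power divide_simps mult_right_mono)
  then show ?thesis using that by blast
qed

lemma summable_scaled_exp_series: "summable (\<lambda>k. M * (r ^ k / fact k :: real))"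
  using summable_exp[of r] by (intro summable_mult) (simp add: field_simps)

lemma summable_bessel_series: "summable (\<lambda>k. bessel_coeff m k * y ^ k)"
proof -
  obtain M where "\<And>k. norm (bessel_coeff m k * y ^ k) \<le> M * (norm y ^ k / fact k)"
    using bessel_coeff_bound[of "{m}"] by (metis compact_sing singletonI)
  then show ?thesis
    by (rule summable_comparison_test'[OF summable_scaled_exp_series])
qed

lemma diffs_bessel_coeff: "diffs (bessel_coeff m) = bessel_coeff (m + 1)"
proof
  fix k
  have "(of_nat (Suc k) + m + 1 :: complex) = of_nat k + (m + 1) + 1" by simp
  then show "diffs (bessel_coeff m) k = bessel_coeff (m + 1) k"
    by (simp add: diffs_def bessel_coeff_def fact_Suc divide_simps del: of_nat_Suc)
qed

lemma bessel_series_has_field_derivative: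
  "(bessel_series m has_field_derivative bessel_series (m + 1) y) (at y)"
  unfolding bessel_series_def[abs_def] diffs_bessel_coeff[symmetric]
  by (rule termdiffs_strong_converges_everywhere[OF summable_bessel_series])

lemma continuous_on_bessel_series: "continuous_on A (bessel_series m)"
  using bessel_series_has_field_derivative
  by (meson DERIV_continuous continuous_at_imp_continuous_on)

lemma bessel_series_0: "bessel_series m 0 = rGamma (m + 1)"
  unfolding bessel_series_def by (subst suminf_finite[of "{0}"]) (auto simp: bessel_coeff_def)

lemma bessel_coeff_recurrence:
  "bessel_coeff (m - 1) (Suc k) = m * bessel_coeff m (Suc k) + bessel_coeff (m + 1) k"
proof -
  define R where "R = rGamma (of_nat (Suc k) + m + 1)"
  have "rGamma (of_nat (Suc k) + m) = (of_nat (Suc k) + m) * R"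
    using rGamma_plus1[of "of_nat (Suc k) + m"] by (simp add: R_def)
  moreover have "bessel_coeff (m + 1) k = R / fact k"
    by (simp add: bessel_coeff_def R_def add_ac)
  ultimately show ?thesis
    by (simp add: bessel_coeff_def R_def fact_Suc field_simps del: of_nat_Suc)
qed

lemma bessel_series_recurrence:
  "bessel_series (m - 1) y = m * bessel_series m y + y * bessel_series (m + 1) y"
proof -
  have "(\<lambda>k. bessel_coeff (m + 1) k * y ^ Suc k) sums (y * bessel_series (m + 1) y)"
    using sums_mult[OF summable_sums[OF summable_bessel_series[of "m + 1" y]], of y]
    by (simp add: bessel_series_def mult_ac)
  then have "(\<lambda>k. if k = 0 then 0 else bessel_coeff (m + 1) (k - 1) * y ^ k)
      sums (y * bessel_series (m + 1) y)"
    using sums_Suc_iff[where f = "\<lambda>k. if k = 0 then 0 else bessel_coeff (m + 1) (k - 1) * y ^ k"]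
    by simp
  from sums_add[OF sums_mult[OF summable_sums[OF summable_bessel_series[of m y]], of m] this]
  have "(\<lambda>k. m * (bessel_coeff m k * y ^ k)
           + (if k = 0 then 0 else bessel_coeff (m + 1) (k - 1) * y ^ k))
      sums (m * bessel_series m y + y * bessel_series (m + 1) y)"
    by (simp add: bessel_series_def)
  moreover have "m * (bessel_coeff m k * y ^ k)
      + (if k = 0 then 0 else bessel_coeff (m + 1) (k - 1) * y ^ k) = bessel_coeff (m - 1) k * y ^ k" for k
  proof (cases k)
    case 0
    then show ?thesis using rGamma_plus1[of m] by (simp add: bessel_coeff_def)
  qed (simp add: bessel_coeff_recurrence algebra_simps)
  ultimately have "(\<lambda>k. bessel_coeff (m - 1) k * y ^ k)
      sums (m * bessel_series m y + y * bessel_series (m + 1) y)"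
    by simp
  then show ?thesis unfolding bessel_series_def by (simp add: sums_iff)
qed

lemma holomorphic_bessel_series_order: "(\<lambda>m. bessel_series m y) holomorphic_on UNIV"
proof (rule holomorphic_uniform_sequence[OF open_UNIV])
  show "(\<lambda>m. \<Sum>k<n. bessel_coeff m k * y ^ k) holomorphic_on UNIV" for n
    unfolding bessel_coeff_def by (intro holomorphic_intros) auto
  show "\<exists>d>0. cball m d \<subseteq> UNIV \<and>
      uniform_limit (cball m d) (\<lambda>n m. \<Sum>k<n. bessel_coeff m k * y ^ k) (\<lambda>m. bessel_series m y) sequentially"
    for m
  proof -
    obtain M where M: "\<And>m' k y. m' \<in> cball m 1 \<Longrightarrow>
        norm (bessel_coeff m' k * y ^ k) \<le> M * (norm y ^ k / fact k)"
      using bessel_coeff_bound[OF compact_cball[of m 1]] by auto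
    have "uniform_limit (cball m 1) (\<lambda>n m. \<Sum>k<n. bessel_coeff m k * y ^ k)
        (\<lambda>m. \<Sum>k. bessel_coeff m k * y ^ k) sequentially"
      by (rule Weierstrass_m_test[where f = "\<lambda>k m. bessel_coeff m k * y ^ k", OF M summable_scaled_exp_series])
    then show ?thesis unfolding bessel_series_def by (intro exI[of _ 1]) auto
  qed
qed

lemma besselJ_eq_bessel_series:
  "besselJ \<nu> z = (z / 2) powr of_real \<nu> * bessel_series (of_real \<nu>) (- ((z / 2) ^ 2))"
proof -
  have "(-1) ^ k * (z / 2) powr of_real \<nu> * (z / 2) ^ (2 * k) * rGamma (of_real (real k + \<nu> + 1))
        / of_nat (fact k)
      = (z / 2) powr of_real \<nu> * (bessel_coeff (of_real \<nu>) k * (- ((z / 2) ^ 2)) ^ k)" for k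
  proof -
    have "(- ((z / 2) ^ 2)) ^ k = (-1) ^ k * (z / 2) ^ (2 * k)"
      by (simp only: power_minus[of "(z / 2) ^ 2"] power_mult)
    moreover have "(of_real (real k + \<nu> + 1) :: complex) = of_nat k + of_real \<nu> + 1" by simp
    ultimately show ?thesis
      unfolding bessel_coeff_def of_nat_fact by (simp only: ac_simps times_divide_eq_left times_divide_eq_right)
  qed
  then have "besselJ \<nu> z
      = (\<Sum>k. (z / 2) powr of_real \<nu> * (bessel_coeff (of_real \<nu>) k * (- ((z / 2) ^ 2)) ^ k))"
    unfolding besselJ_def by presburger
  also have "\<dots> = (z / 2) powr of_real \<nu> * bessel_series (of_real \<nu>) (- ((z / 2) ^ 2))"
    unfolding bessel_series_def by (rule suminf_mult[OF summable_bessel_series])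
  finally show ?thesis .
qed

lemma has_vector_derivative_holomorphic_of_real:
  assumes "f holomorphic_on UNIV" and "\<And>x. g x = f (of_real x)"
  shows "(g has_vector_derivative vector_derivative g (at x)) (at x)"
proof -
  have "(f has_field_derivative deriv f (of_real x)) (at (of_real x))"
    using holomorphic_derivI[OF assms(1) open_UNIV UNIV_I] .
  from has_vector_derivative_real_field[OF this] have "g differentiable at x"
    unfolding assms(2)[abs_def] differentiable_def has_vector_derivative_def by blast
  then show ?thesis by (simp add: vector_derivative_works)
qed

lemma has_vector_derivative_besselJ_order:
  "((\<lambda>\<mu>. besselJ \<mu> z) has_vector_derivative besselJ_dorder \<mu> z) (at \<mu>)"
  unfolding besselJ_dorder_def
proof (rule has_vector_derivative_holomorphic_of_real)
  show "(\<lambda>m. (z / 2) powr m * bessel_series m (- ((z / 2) ^ 2))) holomorphic_on UNIV"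
    by (intro holomorphic_intros holomorphic_bessel_series_order)
qed (rule besselJ_eq_bessel_series)

definition besselI :: "real \<Rightarrow> complex \<Rightarrow> complex" where
  "besselI \<nu> w = (w / 2) powr of_real \<nu> * bessel_series (of_real \<nu>) ((w / 2) ^ 2)"

lemma besselI_recurrence:
  assumes "w \<noteq> 0"
  shows "besselI (\<nu> - 1) w = 2 * of_real \<nu> / w * besselI \<nu> w + besselI (\<nu> + 1) w"
proof -
  define u where "u = w / 2"
  have u: "u \<noteq> 0" "w = 2 * u" using assms by (simp_all add: u_def)
  have "besselI (\<nu> - 1) w = u powr (of_real \<nu> - 1)
      * (of_real \<nu> * bessel_series (of_real \<nu>) (u ^ 2) + u ^ 2 * bessel_series (of_real \<nu> + 1) (u ^ 2))"
    using bessel_series_recurrence[of "of_real \<nu>" "u ^ 2"] by (simp add: besselI_def u_def)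
  also have "\<dots> = 2 * of_real \<nu> / w * besselI \<nu> w + besselI (\<nu> + 1) w"
    unfolding besselI_def u_def[symmetric] using u
    by (simp add: powr_diff powr_add power2_eq_square field_simps)
  finally show ?thesis .
qed

lemma besselI_has_field_derivative_raise:
  assumes "0 < Re w"
  shows "(besselI \<nu> has_field_derivative besselI (\<nu> + 1) w + of_real \<nu> / w * besselI \<nu> w) (at w)"
proof -
  define u where "u = w / 2"
  have u: "u \<noteq> 0" "w = 2 * u" "u \<notin> \<real>\<^sub>\<le>\<^sub>0"
    using assms by (auto simp: u_def nonpos_Reals_def)
  have half: "((\<lambda>w. w / 2) has_field_derivative 1 / 2) (at w)"
    by (auto intro!: derivative_eq_intros)
  have "((\<lambda>w. (w / 2) powr of_real \<nu>) has_field_derivative of_real \<nu> * u powr (of_real \<nu> - 1) * (1 / 2)) (at w)"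
    using DERIV_chain2[OF has_field_derivative_powr[OF u(3)[unfolded u_def], of "of_real \<nu>"] half]
    by (simp add: u_def)
  moreover have "((\<lambda>w. bessel_series (of_real \<nu>) ((w / 2) ^ 2)) has_field_derivative
      bessel_series (of_real \<nu> + 1) (u ^ 2) * (2 * u * (1 / 2))) (at w)"
  proof -
    have "((\<lambda>w. (w / 2) ^ 2) has_field_derivative 2 * u * (1 / 2)) (at w)"
      by (auto simp: u_def intro!: derivative_eq_intros)
    from DERIV_chain2[OF bessel_series_has_field_derivative this] show ?thesis by (simp add: u_def)
  qed
  ultimately have "(besselI \<nu> has_field_derivative
      of_real \<nu> * u powr (of_real \<nu> - 1) * (1 / 2) * bessel_series (of_real \<nu>) (u ^ 2)
      + u powr of_real \<nu> * (bessel_series (of_real \<nu> + 1) (u ^ 2) * (2 * u * (1 / 2)))) (at w)"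
    unfolding besselI_def[abs_def] by (rule DERIV_mult[THEN DERIV_cong]) (simp add: u_def)
  moreover have "of_real \<nu> * u powr (of_real \<nu> - 1) * (1 / 2) * bessel_series (of_real \<nu>) (u ^ 2)
      + u powr of_real \<nu> * (bessel_series (of_real \<nu> + 1) (u ^ 2) * (2 * u * (1 / 2)))
      = besselI (\<nu> + 1) w + of_real \<nu> / w * besselI \<nu> w"
    unfolding besselI_def u_def[symmetric] using u
    by (simp add: powr_diff powr_add field_simps)
  ultimately show ?thesis by simp
qed

lemma besselI_has_field_derivative_lower:
  assumes "0 < Re w"
  shows "(besselI \<nu> has_field_derivative besselI (\<nu> - 1) w - of_real \<nu> / w * besselI \<nu> w) (at w)"
proof -
  have "w \<noteq> 0" using assms by auto
  then have eq: "besselI (\<nu> + 1) w + of_real \<nu> / w * besselI \<nu> w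
      = besselI (\<nu> - 1) w - of_real \<nu> / w * besselI \<nu> w"
    by (simp add: besselI_recurrence field_simps)
  show ?thesis using besselI_has_field_derivative_raise[OF assms, of \<nu>] unfolding eq .
qed

lemma exp_quarter_pi_power2: "exp (\<i> * of_real (pi / 4)) ^ 2 = \<i>" "exp (- \<i> * of_real (pi / 4)) ^ 2 = - \<i>"
proof -
  have "exp (\<i> * of_real (pi / 4)) ^ 2 = exp (\<i> * of_real (pi / 2))"
       "exp (- \<i> * of_real (pi / 4)) ^ 2 = exp (- \<i> * of_real (pi / 2))"
    by (simp_all add: power2_eq_square exp_add[symmetric])
  then show "exp (\<i> * of_real (pi / 4)) ^ 2 = \<i>" "exp (- \<i> * of_real (pi / 4)) ^ 2 = - \<i>"
    by (simp_all add: exp_eq_polar)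
qed

lemma powr_of_real_mult_exp:
  assumes "0 < x" and "- pi < \<theta>" and "\<theta> \<le> pi"
  shows "(of_real x * exp (\<i> * of_real \<theta>)) powr of_real \<nu>
      = of_real (x powr \<nu>) * exp (\<i> * of_real (\<theta> * \<nu>))"
proof -
  have "(of_real x * exp (\<i> * of_real \<theta>)) powr of_real \<nu>
      = of_real x powr of_real \<nu> * exp (\<i> * of_real \<theta>) powr of_real \<nu>"
    by (rule powr_times_real_left) (use assms in auto)
  also have "exp (\<i> * of_real \<theta>) powr of_real \<nu> = exp (\<i> * of_real \<theta> * of_real \<nu>)"
    by (rule exp_powr_complex) (use assms in auto)
  finally show ?thesis
    using assms(1) by (simp add: powr_of_real mult.assoc)
qed

lemma besselI_exp_quarter_pi:
  assumes "0 < x"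
  shows "besselI \<nu> (exp (\<i> * of_real (pi / 4)) * of_real x)
       = exp (\<i> * of_real (pi * \<nu> / 2)) * besselJ \<nu> (exp (- \<i> * of_real (pi / 4)) * of_real x)"
proof -
  have "(exp (\<i> * of_real (pi / 4)) * of_real x / 2) powr of_real \<nu>
      = of_real ((x / 2) powr \<nu>) * exp (\<i> * of_real (pi / 4 * \<nu>))"
    using powr_of_real_mult_exp[of "x / 2" "pi / 4" \<nu>] assms pi_gt_zero by (simp add: mult.commute)
  moreover have "(exp (- \<i> * of_real (pi / 4)) * of_real x / 2) powr of_real \<nu>
      = of_real ((x / 2) powr \<nu>) * exp (\<i> * of_real (- (pi / 4) * \<nu>))"
    using powr_of_real_mult_exp[of "x / 2" "- (pi / 4)" \<nu>] assms pi_gt_zero by (simp add: mult.commute)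
  moreover have "(exp (\<i> * of_real (pi / 4)) * of_real x / 2) ^ 2
      = - ((exp (- \<i> * of_real (pi / 4)) * of_real x / 2) ^ 2)"
    unfolding power_mult_distrib power_divide exp_quarter_pi_power2 by simp
  moreover have "exp (\<i> * of_real (pi / 4 * \<nu>))
      = exp (\<i> * of_real (pi * \<nu> / 2)) * exp (\<i> * of_real (- (pi / 4) * \<nu>))"
    by (simp add: exp_add[symmetric] field_simps)
  ultimately show ?thesis
    unfolding besselI_def besselJ_eq_bessel_series by (simp only: mult_ac)
qed

section \<open>Integrals of exponentially decaying functions\<close>

lemma integrable_on_atLeast_exp_bound:
  fixes h :: "real \<Rightarrow> 'a::euclidean_space"
  assumes "continuous_on {0..} h" and "\<And>t. 0 \<le> t \<Longrightarrow> norm (h t) \<le> C * exp (- t)" and "0 \<le> c"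
  shows "h integrable_on {c..}"
proof (rule measurable_bounded_by_integrable_imp_integrable)
  show "h \<in> borel_measurable (lebesgue_on {c..})"
    using assms by (intro continuous_imp_measurable_on_sets_lebesgue) (auto intro: continuous_on_subset)
  show "(\<lambda>t. C * exp (- t)) integrable_on {c..}"
    using integrable_on_cmult_left[OF integrable_on_exp_minus_to_infinity[of 1 c]] by simp
  show "norm (h t) \<le> C * exp (- t)" if "t \<in> {c..}" for t
    using that assms by auto
qed (metis atLeast_borel sets_completionI_sets sets_lborel)

lemma norm_integral_tail_le:
  fixes h :: "real \<Rightarrow> 'a::euclidean_space"
  assumes cont: "continuous_on {0..} h" and bound: "\<And>t. 0 \<le> t \<Longrightarrow> norm (h t) \<le> C * exp (- t)"
    and c: "0 \<le> c"
  shows "norm (integral {0..} h - integral {0..c} h) \<le> C * exp (- c)"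
proof -
  have "h integrable_on {0..c}"
    using cont by (intro integrable_continuous_interval) (auto intro: continuous_on_subset)
  moreover have "h integrable_on {c..}"
    by (rule integrable_on_atLeast_exp_bound[OF cont bound c])
  moreover have "{0..} = {0..c} \<union> {c..}" and "negligible ({0..c} \<inter> {c..})"
    using c by (auto intro: negligible_subset[of "{c}"])
  ultimately have "integral {0..} h - integral {0..c} h = integral {c..} h"
    by (simp add: integral_Un)
  also have "norm \<dots> \<le> integral {c..} (\<lambda>t. C * exp (- t))"
    using bound c \<open>h integrable_on {c..}\<close>
      integrable_on_cmult_left[OF integrable_on_exp_minus_to_infinity[of 1 c], of C]
    by (intro integral_norm_bound_integral) auto
  also have "\<dots> = C * exp (- c)"
    using has_integral_mult_right[OF has_integral_exp_minus_to_infinity[of 1 c], of C]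
    by (intro integral_unique) simp
  finally show ?thesis .
qed

lemma tendsto_integral_atLeastAtMost_at_top:
  fixes h :: "real \<Rightarrow> 'a::euclidean_space"
  assumes "continuous_on {0..} h" and "\<And>t. 0 \<le> t \<Longrightarrow> norm (h t) \<le> C * exp (- t)"
  shows "((\<lambda>c. integral {0..c} h) \<longlongrightarrow> integral {0..} h) at_top"
proof -
  have "\<forall>\<^sub>F c in at_top. norm (integral {0..} h - integral {0..c} h) \<le> C * exp (- c)"
    using eventually_ge_at_top[of 0] by eventually_elim (rule norm_integral_tail_le[OF assms])
  moreover have "((\<lambda>c. C * exp (- c)) \<longlongrightarrow> 0) at_top"
    by (intro tendsto_mult_right_zero) real_asymp
  ultimately have "((\<lambda>c. integral {0..} h - integral {0..c} h) \<longlongrightarrow> 0) at_top"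
    by (rule Lim_null_comparison)
  from tendsto_diff[OF tendsto_const[of "integral {0..} h"] this] show ?thesis by simp
qed

lemma uniform_limit_integral_atLeastAtMost:
  fixes h :: "'b \<Rightarrow> real \<Rightarrow> 'a::euclidean_space"
  assumes "\<And>m. m \<in> S \<Longrightarrow> continuous_on {0..} (h m)"
    and "\<And>m t. m \<in> S \<Longrightarrow> 0 \<le> t \<Longrightarrow> norm (h m t) \<le> C * exp (- t)"
  shows "uniform_limit S (\<lambda>n m. integral {0..real n} (h m)) (\<lambda>m. integral {0..} (h m)) sequentially"
proof (rule uniform_limitI)
  fix e :: real
  assume "0 < e"
  have "(\<lambda>n. C * exp (- real n)) \<longlonglongrightarrow> 0"
    by (intro tendsto_mult_right_zero) real_asymp
  with \<open>0 < e\<close> have "eventually (\<lambda>n. C * exp (- real n) < e) sequentially"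
    by (simp add: order_tendsto_iff)
  then show "eventually (\<lambda>n. \<forall>m\<in>S. dist (integral {0..real n} (h m)) (integral {0..} (h m)) < e) sequentially"
  proof (rule eventually_mono, intro ballI)
    fix n m
    assume "C * exp (- real n) < e" and "m \<in> S"
    with norm_integral_tail_le[OF assms, of m "real n"]
    show "dist (integral {0..real n} (h m)) (integral {0..} (h m)) < e"
      by (simp add: dist_norm norm_minus_commute)
  qed
qed

section \<open>The Macdonald function\<close>

lemma cosh_of_real: "cosh (of_real t :: complex) = of_real (cosh t)"
  by (simp add: cosh_def scaleR_conv_of_real exp_of_real[symmetric])

lemma sinh_of_real: "sinh (of_real t :: complex) = of_real (sinh t)"
  by (simp add: sinh_def scaleR_conv_of_real exp_of_real[symmetric])

lemma norm_cosh_le: "norm (cosh z) \<le> cosh (Re z)"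
proof -
  have "norm (cosh z) \<le> (norm (exp z) + norm (exp (- z))) / 2"
    unfolding cosh_field_def norm_divide using norm_triangle_ineq[of "exp z" "exp (- z)"] by simp
  then show ?thesis by (simp add: cosh_field_def)
qed

lemma cosh_real_mono_abs: "\<bar>x\<bar> \<le> \<bar>y\<bar> \<Longrightarrow> cosh x \<le> cosh (y :: real)"
  using cosh_real_nonneg_le_iff[of "\<bar>x\<bar>" "\<bar>y\<bar>"] by simp

lemma cosh_mult_cosh_complex:
  "cosh (of_real t) * cosh (m * of_real t) = (cosh ((m + 1) * of_real t) + cosh ((m - 1) * of_real t)) / (2 :: complex)"
  by (simp add: distrib_right left_diff_distrib cosh_add cosh_diff)

lemma sinh_mult_sinh_complex:
  "sinh (of_real t) * sinh (m * of_real t) = (cosh ((m + 1) * of_real t) - cosh ((m - 1) * of_real t)) / (2 :: complex)"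
  by (simp add: distrib_right left_diff_distrib cosh_add cosh_diff)

definition besselK_integrand :: "complex \<Rightarrow> complex \<Rightarrow> real \<Rightarrow> complex" where
  "besselK_integrand m w t = exp (- w * of_real (cosh t)) * cosh (m * of_real t)"

lemma besselK_eq_integral: "besselK \<nu> w = integral {0..} (besselK_integrand (of_real \<nu>) w)"
  unfolding besselK_def besselK_integrand_def by (simp add: cosh_of_real flip: of_real_mult)

lemma continuous_on_besselK_integrand [continuous_intros]: "continuous_on S (besselK_integrand m w)"
  unfolding besselK_integrand_def by (intro continuous_intros)

lemma exp_neg_le_inverse_power:
  fixes y :: real
  assumes "0 < y" and "0 < n"
  shows "exp (- y) \<le> 1 / (y / n) ^ n"
proof -
  have "(y / n) ^ n \<le> (1 + y / n) ^ n"
    using assms by (intro power_mono) auto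
  also have "\<dots> \<le> exp y"
    using assms by (intro exp_ge_one_plus_x_over_n_power_n) auto
  finally show ?thesis
    using assms by (simp add: exp_minus field_simps)
qed

lemma cosh_le_exp_abs: "cosh x \<le> exp \<bar>x :: real\<bar>"
  by (cases "0 \<le> x") (auto simp: cosh_def)

lemma exp_neg_cosh_bound:
  fixes a \<nu> :: real
  assumes "0 < a"
  obtains C where "\<And>t. 0 \<le> t \<Longrightarrow> exp (- a * cosh t) * cosh (\<nu> * t) \<le> C * exp (- t)"
proof -
  define n :: nat where "n = nat \<lceil>\<bar>\<nu>\<bar>\<rceil> + 1"
  have n: "0 < n" "\<bar>\<nu>\<bar> + 1 \<le> real n"
    unfolding n_def by linarith+
  define C where "C = (2 * real n / a) ^ n"
  \<comment> \<open>\<open>cosh t \<ge> exp t / 2\<close> and \<open>exp (- y) \<le> (n / y) ^ n\<close> trade the double exponential decay for \<open>exp (- n t)\<close>.\<close>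
  have "exp (- a * cosh t) * cosh (\<nu> * t) \<le> C * exp (- t)" if "0 \<le> t" for t
  proof -
    define y where "y = a * exp t / 2"
    have "0 < y" unfolding y_def using assms by simp
    have "y \<le> a * cosh t"
      unfolding y_def cosh_def using assms by (simp add: field_simps)
    then have "exp (- a * cosh t) \<le> exp (- y)"
      by simp
    also have "\<dots> \<le> 1 / (y / n) ^ n"
      by (rule exp_neg_le_inverse_power[OF \<open>0 < y\<close> n(1)])
    also have "\<dots> = C * exp (- (n * t))"
      unfolding y_def C_def using assms n(1)
      by (simp add: power_divide power_mult_distrib exp_of_nat_mult[symmetric] exp_minus field_simps)
    finally have "exp (- a * cosh t) * cosh (\<nu> * t) \<le> C * exp (- (n * t)) * exp (\<bar>\<nu>\<bar> * t)"
      using cosh_le_exp_abs[of "\<nu> * t"] that assms by (intro mult_mono) (auto simp: abs_mult C_def)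
    also have "\<dots> = C * exp ((\<bar>\<nu>\<bar> - n) * t)"
      by (simp add: exp_add[symmetric] algebra_simps)
    also have "\<dots> \<le> C * exp (- t)"
    proof -
      have "(\<bar>\<nu>\<bar> - n) * t \<le> (-1) * t"
        using n(2) that by (intro mult_right_mono) auto
      then show ?thesis
        unfolding C_def using assms by (intro mult_left_mono) auto
    qed
    finally show ?thesis .
  qed
  then show ?thesis using that by blast
qed

lemma besselK_integrand_bound:
  assumes "0 < a"
  obtains C where "\<And>m w t. \<bar>Re m\<bar> \<le> N \<Longrightarrow> a \<le> Re w \<Longrightarrow> 0 \<le> t
      \<Longrightarrow> norm (besselK_integrand m w t) \<le> C * exp (- t)"
proof -
  obtain C where C: "\<And>t. 0 \<le> t \<Longrightarrow> exp (- a * cosh t) * cosh (N * t) \<le> C * exp (- t)"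
    using exp_neg_cosh_bound[OF assms, where \<nu> = N] by blast
  have "norm (besselK_integrand m w t) \<le> C * exp (- t)"
    if "\<bar>Re m\<bar> \<le> N" "a \<le> Re w" "0 \<le> t" for m w t
  proof -
    have "norm (besselK_integrand m w t) \<le> exp (- Re w * cosh t) * cosh (Re m * t)"
      using norm_cosh_le[of "m * of_real t"] unfolding besselK_integrand_def norm_mult
      by (simp add: mult_left_mono)
    also have "\<dots> \<le> exp (- a * cosh t) * cosh (N * t)"
      using that cosh_real_ge_1[of t]
      by (intro mult_mono cosh_real_mono_abs) (auto simp: abs_mult mult_right_mono)
    also have "\<dots> \<le> C * exp (- t)"
      using C that(3) .
    finally show ?thesis .
  qed
  then show ?thesis using that by blast
qed

lemma tendsto_besselK_partial_integral:
  assumes "0 < Re w"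
  shows "((\<lambda>c. integral {0..c} (besselK_integrand (of_real \<nu>) w)) \<longlongrightarrow> besselK \<nu> w) at_top"
proof -
  obtain C where C: "\<And>m z t. \<bar>Re m\<bar> \<le> \<bar>\<nu>\<bar> \<Longrightarrow> Re w \<le> Re z \<Longrightarrow> 0 \<le> t
      \<Longrightarrow> norm (besselK_integrand m z t) \<le> C * exp (- t)"
    using besselK_integrand_bound[OF assms, where N = "\<bar>\<nu>\<bar>"] by blast
  show ?thesis
    unfolding besselK_eq_integral
    by (rule tendsto_integral_atLeastAtMost_at_top[OF continuous_on_besselK_integrand C]) simp_all
qed

lemma uniform_limit_besselK_partial_integral:
  assumes "0 < a"
  shows "uniform_limit {w. a \<le> Re w} (\<lambda>n w. integral {0..real n} (besselK_integrand (of_real \<nu>) w))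
      (besselK \<nu>) sequentially"
proof -
  obtain C where C: "\<And>m z t. \<bar>Re m\<bar> \<le> \<bar>\<nu>\<bar> \<Longrightarrow> a \<le> Re z \<Longrightarrow> 0 \<le> t
      \<Longrightarrow> norm (besselK_integrand m z t) \<le> C * exp (- t)"
    using besselK_integrand_bound[OF assms, where N = "\<bar>\<nu>\<bar>"] by blast
  show ?thesis
    unfolding besselK_eq_integral[abs_def]
    by (rule uniform_limit_integral_atLeastAtMost[OF continuous_on_besselK_integrand C]) simp_all
qed

lemma besselK_integrand_has_field_derivative:
  "((\<lambda>w. besselK_integrand m w t) has_field_derivative
      - (besselK_integrand (m + 1) w t + besselK_integrand (m - 1) w t) / 2) (at w within U)"
proof -
  have "((\<lambda>w. besselK_integrand m w t) has_field_derivative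
      - (cosh (of_real t) * cosh (m * of_real t)) * exp (- w * of_real (cosh t))) (at w within U)"
    unfolding besselK_integrand_def by (auto intro!: derivative_eq_intros simp: cosh_of_real)
  moreover have "besselK_integrand (m + 1) w t + besselK_integrand (m - 1) w t
      = 2 * (cosh (of_real t) * cosh (m * of_real t)) * exp (- w * of_real (cosh t))"
    unfolding besselK_integrand_def cosh_mult_cosh_complex by (simp add: algebra_simps)
  ultimately show ?thesis by (simp add: mult.assoc)
qed

lemma besselK_partial_integral_has_field_derivative:
  "((\<lambda>w. integral {0..c} (besselK_integrand m w)) has_field_derivative
      - (integral {0..c} (besselK_integrand (m + 1) w) + integral {0..c} (besselK_integrand (m - 1) w)) / 2)
    (at w)"
proof -
  have "((\<lambda>w. integral (cbox 0 c) (besselK_integrand m w)) has_field_derivative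
      integral (cbox 0 c) (\<lambda>t. - (besselK_integrand (m + 1) w t + besselK_integrand (m - 1) w t) / 2))
      (at w within UNIV)"
  proof (rule leibniz_rule_field_derivative[OF besselK_integrand_has_field_derivative])
    show "besselK_integrand m z integrable_on cbox 0 c" for z
      by (intro integrable_continuous continuous_on_besselK_integrand)
    show "continuous_on (UNIV \<times> cbox 0 c)
        (\<lambda>(z, t). - (besselK_integrand (m + 1) z t + besselK_integrand (m - 1) z t) / 2)"
      unfolding besselK_integrand_def case_prod_beta by (intro continuous_intros) auto
  qed simp_all
  moreover have "integral (cbox 0 c) (\<lambda>t. - (besselK_integrand (m + 1) w t + besselK_integrand (m - 1) w t) / 2)
      = - (integral {0..c} (besselK_integrand (m + 1) w) + integral {0..c} (besselK_integrand (m - 1) w)) / 2"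
    unfolding cbox_interval
    by (intro integral_unique has_integral_divide has_integral_neg has_integral_add integrable_integral
        integrable_continuous_interval continuous_on_besselK_integrand)
  ultimately show ?thesis
    by (simp add: cbox_interval)
qed

text \<open>By uniform convergence of the truncated integrals, the derivative of the limit is the limit of
  the derivatives.\<close>
lemma besselK_has_field_derivative:
  assumes "0 < Re w"
  shows "(besselK \<nu> has_field_derivative - (besselK (\<nu> + 1) w + besselK (\<nu> - 1) w) / 2) (at w)"
proof -
  define U where "U = {w. 0 < Re w}"
  define F where "F \<mu> n w = integral {0..real n} (besselK_integrand (of_real \<mu>) w)" for \<mu> n w
  define F' where "F' n w = - (F (\<nu> + 1) n w + F (\<nu> - 1) n w) / 2" for n w
  have "F \<nu> n = (\<lambda>w. integral {0..real n} (besselK_integrand (of_real \<nu>) w))" for n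
    by (simp add: F_def fun_eq_iff)
  then have hfd: "(F \<nu> n has_field_derivative F' n w) (at w)" for n w
    using besselK_partial_integral_has_field_derivative[of "real n" "of_real \<nu>" w] by (simp add: F'_def F_def)
  have ulim: "\<exists>d>0. cball w d \<subseteq> U \<and> uniform_limit (cball w d) (F \<nu>) (besselK \<nu>) sequentially"
    if "w \<in> U" for w
  proof (intro exI conjI)
    show "0 < Re w / 2"
      using that by (simp add: U_def)
    have sub: "cball w (Re w / 2) \<subseteq> {z. Re w / 2 \<le> Re z}"
    proof
      fix z
      assume "z \<in> cball w (Re w / 2)"
      then show "z \<in> {z. Re w / 2 \<le> Re z}"
        using abs_Re_le_cmod[of "w - z"] by (simp add: dist_norm)
    qed
    show "uniform_limit (cball w (Re w / 2)) (F \<nu>) (besselK \<nu>) sequentially"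
      unfolding F_def
      by (rule uniform_limit_on_subset[OF uniform_limit_besselK_partial_integral[OF \<open>0 < Re w / 2\<close>] sub])
    show "cball w (Re w / 2) \<subseteq> U"
      using sub \<open>0 < Re w / 2\<close> by (auto simp: U_def)
  qed
  have "\<exists>g. \<forall>w\<in>U. (besselK \<nu> has_field_derivative g w) (at w) \<and> (\<lambda>n. F' n w) \<longlonglongrightarrow> g w"
    by (rule has_complex_derivative_uniform_sequence) (use hfd ulim in \<open>auto simp: U_def open_halfspace_Re_gt\<close>)
  then obtain g where g: "\<forall>w\<in>U. (besselK \<nu> has_field_derivative g w) (at w) \<and> (\<lambda>n. F' n w) \<longlonglongrightarrow> g w"
    by blast
  have "(\<lambda>n. F' n w) \<longlonglongrightarrow> - (besselK (\<nu> + 1) w + besselK (\<nu> - 1) w) / 2"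
    unfolding F'_def F_def
    by (intro tendsto_intros filterlim_compose[OF tendsto_besselK_partial_integral[OF assms]
          filterlim_real_sequentially]) simp
  moreover have "(besselK \<nu> has_field_derivative g w) (at w)" "(\<lambda>n. F' n w) \<longlonglongrightarrow> g w"
    using g assms by (auto simp: U_def)
  ultimately show ?thesis
    using LIMSEQ_unique by metis
qed

lemma besselK_even: "besselK (- \<nu>) w = besselK \<nu> w"
  unfolding besselK_def by simp

lemma abs_sinh_le_cosh: "\<bar>sinh x\<bar> \<le> cosh (x :: real)"
  using sinh_le_cosh_real[of "\<bar>x\<bar>"] by simp

lemma besselK_partial_integral_by_parts:
  assumes "0 \<le> c"
  shows "exp (- w * of_real (cosh c)) * sinh (m * of_real c)
      = m * integral {0..c} (besselK_integrand m w)
        + w / 2 * (integral {0..c} (besselK_integrand (m - 1) w) - integral {0..c} (besselK_integrand (m + 1) w))"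
proof (rule has_integral_unique)
  define \<Phi>' where "\<Phi>' t = m * besselK_integrand m w t
      + w / 2 * (besselK_integrand (m - 1) w t - besselK_integrand (m + 1) w t)" for t
  have \<Psi>: "((\<lambda>z. exp (- w * cosh z) * sinh (m * z)) has_field_derivative
      exp (- w * cosh z) * (m * cosh (m * z) - w * (sinh z * sinh (m * z)))) (at z)" for z
    by (auto intro!: derivative_eq_intros simp: algebra_simps)
  have "((\<lambda>t. exp (- w * of_real (cosh t)) * sinh (m * of_real t)) has_vector_derivative \<Phi>' t) (at t within {0..c})"
    for t
    using has_vector_derivative_real_field[OF \<Psi>[of "of_real t"], where s = "{0..c}"]
    unfolding \<Phi>'_def besselK_integrand_def sinh_mult_sinh_complex
    by (simp add: cosh_of_real algebra_simps diff_divide_distrib)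
  from fundamental_theorem_of_calculus[OF assms this]
  show "(\<Phi>' has_integral exp (- w * of_real (cosh c)) * sinh (m * of_real c)) {0..c}"
    by simp
  show "(\<Phi>' has_integral m * integral {0..c} (besselK_integrand m w)
      + w / 2 * (integral {0..c} (besselK_integrand (m - 1) w) - integral {0..c} (besselK_integrand (m + 1) w)))
      {0..c}"
    unfolding \<Phi>'_def
    by (intro has_integral_add has_integral_mult_right has_integral_diff integrable_integral
        integrable_continuous_interval continuous_on_besselK_integrand)
qed

text \<open>Let \<open>c \<rightarrow> \<infinity>\<close> in the integration by parts: the boundary term decays like the integrand.\<close>
lemma besselK_recurrence:
  assumes "0 < Re w"
  shows "w * (besselK (\<nu> - 1) w - besselK (\<nu> + 1) w) = - 2 * of_real \<nu> * besselK \<nu> w"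
proof -
  define m where "m = (of_real \<nu> :: complex)"
  define \<Phi> where "\<Phi> c = exp (- w * of_real (cosh c)) * sinh (m * of_real c)" for c
  have "((\<lambda>c. m * integral {0..c} (besselK_integrand m w)
        + w / 2 * (integral {0..c} (besselK_integrand (m - 1) w) - integral {0..c} (besselK_integrand (m + 1) w)))
      \<longlongrightarrow> m * besselK \<nu> w + w / 2 * (besselK (\<nu> - 1) w - besselK (\<nu> + 1) w)) at_top"
    unfolding m_def
    using tendsto_besselK_partial_integral[OF assms, of \<nu>] tendsto_besselK_partial_integral[OF assms, of "\<nu> - 1"]
      tendsto_besselK_partial_integral[OF assms, of "\<nu> + 1"]
    by (intro tendsto_intros) simp_all
  moreover have "\<forall>\<^sub>F c in at_top. m * integral {0..c} (besselK_integrand m w)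
        + w / 2 * (integral {0..c} (besselK_integrand (m - 1) w) - integral {0..c} (besselK_integrand (m + 1) w))
      = \<Phi> c"
    using eventually_ge_at_top[of 0]
    by eventually_elim (simp only: \<Phi>_def besselK_partial_integral_by_parts)
  ultimately have "(\<Phi> \<longlongrightarrow> m * besselK \<nu> w + w / 2 * (besselK (\<nu> - 1) w - besselK (\<nu> + 1) w)) at_top"
    by (rule Lim_transform_eventually)
  moreover have "(\<Phi> \<longlongrightarrow> 0) at_top"
  proof -
    obtain C where C: "\<And>m' z t. \<bar>Re m'\<bar> \<le> \<bar>\<nu>\<bar> \<Longrightarrow> Re w \<le> Re z \<Longrightarrow> 0 \<le> t
        \<Longrightarrow> norm (besselK_integrand m' z t) \<le> C * exp (- t)"
      using besselK_integrand_bound[OF assms, where N = "\<bar>\<nu>\<bar>"] by blast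
    have "norm (\<Phi> t) \<le> C * exp (- t)" if "0 \<le> t" for t
    proof -
      have "norm (\<Phi> t) \<le> norm (besselK_integrand m w t)"
        using abs_sinh_le_cosh[of "\<nu> * t"]
        unfolding \<Phi>_def besselK_integrand_def m_def norm_mult
        by (simp add: sinh_of_real cosh_of_real mult_left_mono flip: of_real_mult)
      also have "\<dots> \<le> C * exp (- t)"
        unfolding m_def using that by (intro C) simp_all
      finally show ?thesis .
    qed
    then have "\<forall>\<^sub>F t in at_top. norm (\<Phi> t) \<le> C * exp (- t)"
      by (intro eventually_mono[OF eventually_ge_at_top[of 0]])
    moreover have "((\<lambda>t. C * exp (- t)) \<longlongrightarrow> 0) at_top"
      by (intro tendsto_mult_right_zero) real_asymp
    ultimately show ?thesis
      by (rule Lim_null_comparison)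
  qed
  ultimately have "m * besselK \<nu> w + w / 2 * (besselK (\<nu> - 1) w - besselK (\<nu> + 1) w) = 0"
    by (rule tendsto_unique[OF trivial_limit_at_top_linorder])
  then show ?thesis
    unfolding m_def by (simp add: field_simps)
qed

lemma besselK_has_field_derivative_lower:
  assumes "0 < Re w"
  shows "(besselK \<nu> has_field_derivative - besselK (\<nu> - 1) w - of_real \<nu> / w * besselK \<nu> w) (at w)"
proof -
  have "w \<noteq> 0" using assms by auto
  with besselK_recurrence[OF assms, of \<nu>]
  have eq: "- (besselK (\<nu> + 1) w + besselK (\<nu> - 1) w) / 2 = - besselK (\<nu> - 1) w - of_real \<nu> / w * besselK \<nu> w"
    by (simp add: field_simps)
  show ?thesis
    using besselK_has_field_derivative[OF assms, of \<nu>] unfolding eq .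
qed

lemma besselK_has_field_derivative_raise:
  assumes "0 < Re w"
  shows "(besselK \<nu> has_field_derivative - besselK (\<nu> + 1) w + of_real \<nu> / w * besselK \<nu> w) (at w)"
proof -
  have "w \<noteq> 0" using assms by auto
  with besselK_recurrence[OF assms, of \<nu>]
  have eq: "- (besselK (\<nu> + 1) w + besselK (\<nu> - 1) w) / 2 = - besselK (\<nu> + 1) w + of_real \<nu> / w * besselK \<nu> w"
    by (simp add: field_simps)
  show ?thesis
    using besselK_has_field_derivative[OF assms, of \<nu>] unfolding eq .
qed

lemma holomorphic_besselK_integral_order:
  assumes "0 < Re w"
  shows "(\<lambda>m. integral {0..} (besselK_integrand m w)) holomorphic_on UNIV"
proof (rule holomorphic_uniform_sequence[OF open_UNIV])
  show "(\<lambda>m. integral {0..real n} (besselK_integrand m w)) holomorphic_on UNIV" for n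
    unfolding cbox_interval[symmetric]
  proof (rule leibniz_rule_holomorphic)
    show "((\<lambda>m. besselK_integrand m w t) has_field_derivative
        exp (- w * of_real (cosh t)) * (sinh (m * of_real t) * of_real t)) (at m within UNIV)" for m t
      unfolding besselK_integrand_def by (auto intro!: derivative_eq_intros)
    show "besselK_integrand m w integrable_on cbox 0 (real n)" for m
      by (intro integrable_continuous continuous_on_besselK_integrand)
    show "continuous_on (UNIV \<times> cbox 0 (real n))
        (\<lambda>(m, t). exp (- w * of_real (cosh t)) * (sinh (m * of_real t) * of_real t))"
      unfolding case_prod_beta by (intro continuous_intros)
  qed simp
  show "\<exists>d>0. cball m d \<subseteq> UNIV \<and> uniform_limit (cball m d)
      (\<lambda>n m. integral {0..real n} (besselK_integrand m w)) (\<lambda>m. integral {0..} (besselK_integrand m w))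
      sequentially" for m
  proof (intro exI conjI)
    have Re: "\<bar>Re m'\<bar> \<le> \<bar>Re m\<bar> + 1" if "m' \<in> cball m 1" for m'
      using that abs_Re_le_cmod[of "m - m'"] by (simp add: dist_norm)
    obtain C where C: "\<And>m' z t. \<bar>Re m'\<bar> \<le> \<bar>Re m\<bar> + 1 \<Longrightarrow> Re w \<le> Re z \<Longrightarrow> 0 \<le> t
        \<Longrightarrow> norm (besselK_integrand m' z t) \<le> C * exp (- t)"
      using besselK_integrand_bound[OF assms, where N = "\<bar>Re m\<bar> + 1"] by blast
    show "uniform_limit (cball m 1) (\<lambda>n m. integral {0..real n} (besselK_integrand m w))
        (\<lambda>m. integral {0..} (besselK_integrand m w)) sequentially"
      by (rule uniform_limit_integral_atLeastAtMost[OF continuous_on_besselK_integrand C]) (simp_all add: Re)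
  qed simp_all
qed

lemma has_vector_derivative_besselK_order:
  assumes "0 < Re w"
  shows "((\<lambda>\<mu>. besselK \<mu> w) has_vector_derivative besselK_dorder \<mu> w) (at \<mu>)"
  unfolding besselK_dorder_def
  by (rule has_vector_derivative_holomorphic_of_real[OF holomorphic_besselK_integral_order[OF assms]
        besselK_eq_integral])

lemma besselK_dorder_uminus:
  assumes "0 < Re w"
  shows "besselK_dorder (- \<nu>) w = - besselK_dorder \<nu> w"
proof -
  have "((\<lambda>\<mu>. - \<mu>) has_vector_derivative -1) (at (- \<nu>))"
    by (auto intro!: derivative_eq_intros simp flip: has_real_derivative_iff_has_vector_derivative)
  from vector_diff_chain_at[OF this has_vector_derivative_besselK_order[OF assms, of "- (- \<nu>)"]]
  have "((\<lambda>\<mu>. besselK \<mu> w) has_vector_derivative - besselK_dorder \<nu> w) (at (- \<nu>))"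
    by (simp add: o_def besselK_even)
  with has_vector_derivative_besselK_order[OF assms, of "- \<nu>"] show ?thesis
    using vector_derivative_unique_at by blast
qed

section \<open>The Macdonald function near zero\<close>

definition besselK_halfline :: "real \<Rightarrow> real \<Rightarrow> real" where
  "besselK_halfline \<nu> x = integral {0..} (\<lambda>t. exp (- x * cosh t) * exp (\<nu> * t))"

lemma besselK_halfline_integrand_bound:
  fixes x \<nu> :: real
  assumes "0 < x"
  obtains C where "\<And>t. 0 \<le> t \<Longrightarrow> norm (exp (- x * cosh t) * exp (\<nu> * t)) \<le> C * exp (- t)"
proof -
  obtain C where C: "\<And>t. 0 \<le> t \<Longrightarrow> exp (- x * cosh t) * cosh (\<nu> * t) \<le> C * exp (- t)"
    using exp_neg_cosh_bound[OF assms, where \<nu> = \<nu>] by blast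
  have "norm (exp (- x * cosh t) * exp (\<nu> * t)) \<le> 2 * C * exp (- t)" if "0 \<le> t" for t
  proof -
    have "norm (exp (- x * cosh t) * exp (\<nu> * t)) \<le> exp (- x * cosh t) * (2 * cosh (\<nu> * t))"
      by (simp add: cosh_def)
    also have "\<dots> \<le> 2 * C * exp (- t)"
      using C[OF that] by simp
    finally show ?thesis .
  qed
  then show ?thesis using that by blast
qed

lemma besselK_halfline_integrable:
  fixes x \<nu> :: real
  assumes "0 < x"
  shows "(\<lambda>t. exp (- x * cosh t) * exp (\<nu> * t)) integrable_on {0..}"
proof -
  obtain C :: real where "\<And>t :: real. 0 \<le> t \<Longrightarrow> norm (exp (- x * cosh t) * exp (\<nu> * t)) \<le> C * exp (- t)"
    using besselK_halfline_integrand_bound[OF assms] by blast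
  then show ?thesis
    by (rule integrable_on_atLeast_exp_bound[rotated]) (auto intro!: continuous_intros)
qed

lemma besselK_of_real:
  assumes "0 < x"
  shows "besselK \<nu> (of_real x) = of_real ((besselK_halfline \<nu> x + besselK_halfline (- \<nu>) x) / 2)"
proof -
  have "((\<lambda>t. (exp (- x * cosh t) * exp (\<nu> * t) + exp (- x * cosh t) * exp (- \<nu> * t)) / 2)
      has_integral (besselK_halfline \<nu> x + besselK_halfline (- \<nu>) x) / 2) {0..}"
    unfolding besselK_halfline_def
    using besselK_halfline_integrable[OF assms, of \<nu>] besselK_halfline_integrable[OF assms, of "- \<nu>"]
    by (intro has_integral_divide has_integral_add integrable_integral) auto
  moreover have "(exp (- x * cosh t) * exp (\<nu> * t) + exp (- x * cosh t) * exp (- \<nu> * t)) / 2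
      = exp (- x * cosh t) * cosh (\<nu> * t)" for t
    by (simp add: cosh_def algebra_simps)
  ultimately have "((\<lambda>t. of_real (exp (- x * cosh t) * cosh (\<nu> * t)) :: complex)
      has_integral of_real ((besselK_halfline \<nu> x + besselK_halfline (- \<nu>) x) / 2)) {0..}"
    by (intro has_integral_of_real) simp
  then show ?thesis
    unfolding besselK_def
    by (intro integral_unique) (simp add: exp_of_real flip: of_real_mult of_real_minus)
qed

text \<open>The substitution \<open>u = (x/2) exp t\<close> turns \<open>(x/2) powr \<nu> * besselK_halfline \<nu> x\<close> into the
  integral of \<open>gamma_kernel \<nu> x\<close> over \<open>[x/2, \<infinity>)\<close>, which tends to \<open>\<Gamma>(\<nu>)\<close> as \<open>x \<rightarrow> 0\<close>.\<close>
definition gamma_kernel :: "real \<Rightarrow> real \<Rightarrow> real \<Rightarrow> real" where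
  "gamma_kernel \<nu> x u = u powr (\<nu> - 1) * exp (- u - x ^ 2 / (4 * u))"

lemma integral_gamma_kernel_eq:
  assumes "0 < x" and "x / 2 \<le> y"
  shows "integral {x / 2..y} (gamma_kernel \<nu> x)
      = (x / 2) powr \<nu> * integral {0..ln (2 * y / x)} (\<lambda>t. exp (- x * cosh t) * exp (\<nu> * t))"
proof (rule has_integral_unique)
  define b where "b = ln (2 * y / x)"
  define g where "g t = x / 2 * exp t" for t
  have "0 \<le> b" "g 0 = x / 2" "g b = y"
    using assms by (simp_all add: b_def g_def field_simps)
  have "((\<lambda>t. g t *\<^sub>R gamma_kernel \<nu> x (g t)) has_integral integral {g 0..g b} (gamma_kernel \<nu> x)) {0..b}"
  proof (rule has_integral_substitution[where c = "x / 2" and d = y])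
    show "(g has_field_derivative g t) (at t within {0..b})" for t
      unfolding g_def by (auto intro!: derivative_eq_intros)
    show "g ` {0..b} \<subseteq> {x / 2..y}"
      using assms \<open>g b = y\<close> by (auto simp: g_def simp flip: \<open>g b = y\<close>)
    show "continuous_on {x / 2..y} (gamma_kernel \<nu> x)"
      unfolding gamma_kernel_def using assms by (intro continuous_intros) auto
  qed (use \<open>0 \<le> b\<close> \<open>g 0 = x / 2\<close> \<open>g b = y\<close> assms in \<open>auto simp: g_def\<close>)
  moreover have "g t *\<^sub>R gamma_kernel \<nu> x (g t) = (x / 2) powr \<nu> * (exp (- x * cosh t) * exp (\<nu> * t))" for t
  proof -
    have "0 < g t" unfolding g_def using assms by simp
    then have "g t * g t powr (\<nu> - 1) = g t powr \<nu>"
      using powr_mult_base[of "g t" "\<nu> - 1"] by simp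
    moreover have "g t powr \<nu> = (x / 2) powr \<nu> * exp (\<nu> * t)"
      unfolding g_def powr_mult exp_powr_real by (simp add: mult_ac)
    moreover have "- g t - x ^ 2 / (4 * g t) = - x * cosh t"
      unfolding g_def cosh_field_def using assms by (simp add: field_simps exp_minus power2_eq_square)
    ultimately show ?thesis
      unfolding gamma_kernel_def by (simp add: mult.assoc[symmetric])
  qed
  ultimately show "((\<lambda>t. (x / 2) powr \<nu> * (exp (- x * cosh t) * exp (\<nu> * t)))
      has_integral integral {x / 2..y} (gamma_kernel \<nu> x)) {0..ln (2 * y / x)}"
    unfolding b_def \<open>g 0 = x / 2\<close> \<open>g b = y\<close>[unfolded b_def] by simp
  show "((\<lambda>t. (x / 2) powr \<nu> * (exp (- x * cosh t) * exp (\<nu> * t))) has_integral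
      (x / 2) powr \<nu> * integral {0..ln (2 * y / x)} (\<lambda>t. exp (- x * cosh t) * exp (\<nu> * t))) {0..ln (2 * y / x)}"
    by (intro has_integral_mult_right integrable_integral integrable_continuous_interval continuous_intros)
qed

lemma gamma_kernel_has_integral:
  assumes "0 < x"
  shows "(gamma_kernel \<nu> x has_integral (x / 2) powr \<nu> * besselK_halfline \<nu> x) {x / 2..}"
proof (rule has_integral_to_inf)
  show "gamma_kernel \<nu> x integrable_on {x / 2..y}" for y
    unfolding gamma_kernel_def using assms
    by (intro integrable_continuous_interval continuous_intros) auto
  show "0 \<le> gamma_kernel \<nu> x y" for y
    unfolding gamma_kernel_def by simp
  obtain C :: real where C: "\<And>t. 0 \<le> t \<Longrightarrow> norm (exp (- x * cosh t) * exp (\<nu> * t)) \<le> C * exp (- t)"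
    using besselK_halfline_integrand_bound[OF assms] by blast
  have cont: "continuous_on {0..} (\<lambda>t. exp (- x * cosh t) * exp (\<nu> * t))"
    by (intro continuous_intros)
  have "filterlim (\<lambda>y. ln (2 * y / x)) at_top at_top"
    using assms by real_asymp
  from filterlim_compose[OF tendsto_integral_atLeastAtMost_at_top[OF cont C] this]
  have "((\<lambda>y. (x / 2) powr \<nu> * integral {0..ln (2 * y / x)} (\<lambda>t. exp (- x * cosh t) * exp (\<nu> * t)))
      \<longlongrightarrow> (x / 2) powr \<nu> * besselK_halfline \<nu> x) at_top"
    unfolding besselK_halfline_def by (intro tendsto_mult tendsto_const)
  moreover have "\<forall>\<^sub>F y in at_top. (x / 2) powr \<nu> * integral {0..ln (2 * y / x)} (\<lambda>t. exp (- x * cosh t) * exp (\<nu> * t))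
      = integral {x / 2..y} (gamma_kernel \<nu> x)"
    using eventually_ge_at_top[of "x / 2"]
    by (rule eventually_mono) (rule integral_gamma_kernel_eq[OF assms, symmetric])
  ultimately show "((\<lambda>y. integral {x / 2..y} (gamma_kernel \<nu> x)) \<longlongrightarrow> (x / 2) powr \<nu> * besselK_halfline \<nu> x) at_top"
    by (rule Lim_transform_eventually)
qed

lemma gamma_kernel_le:
  assumes "0 < u"
  shows "gamma_kernel \<nu> x u \<le> u powr (\<nu> - 1) / exp u"
proof -
  have "exp (- u - x ^ 2 / (4 * u)) \<le> exp (- u)"
    using assms by simp
  then have "gamma_kernel \<nu> x u \<le> u powr (\<nu> - 1) * exp (- u)"
    unfolding gamma_kernel_def by (intro mult_left_mono) auto
  then show ?thesis
    by (simp add: exp_minus divide_inverse)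
qed

lemma gamma_kernel_tendsto:
  assumes "0 < u" and "X \<longlonglongrightarrow> 0"
  shows "(\<lambda>k. gamma_kernel \<nu> (X k) u) \<longlonglongrightarrow> u powr (\<nu> - 1) / exp u"
proof -
  have "(\<lambda>k. gamma_kernel \<nu> (X k) u) \<longlonglongrightarrow> u powr (\<nu> - 1) * exp (- u - 0 ^ 2 / (4 * u))"
    unfolding gamma_kernel_def using assms by (intro tendsto_intros) auto
  then show ?thesis
    by (simp add: exp_minus field_simps)
qed

lemma tendsto_besselK_halfline_at_0:
  assumes "0 < \<nu>"
  shows "((\<lambda>x. (x / 2) powr \<nu> * besselK_halfline \<nu> x) \<longlongrightarrow> Gamma \<nu>) (at_right 0)"
proof (rule tendsto_at_right_sequentially[of 0 1])
  fix S :: "nat \<Rightarrow> real"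
  assume S0: "\<And>n. 0 < S n" and "\<And>n. S n < 1" and "decseq S" and S: "S \<longlonglongrightarrow> 0"
  define f where "f k u = (if u \<in> {S k / 2..} then gamma_kernel \<nu> (S k) u else 0)" for k u
  define h where "h u = u powr (\<nu> - 1) / exp u" for u :: real
  have f: "(f k has_integral (S k / 2) powr \<nu> * besselK_halfline \<nu> (S k)) {0..}" for k
  proof -
    have "{S k / 2..} \<subseteq> {0..}" using S0[of k] by auto
    then show ?thesis
      unfolding f_def by (subst has_integral_restrict) (simp_all add: gamma_kernel_has_integral[OF S0[of k]])
  qed
  have h: "(h has_integral Gamma \<nu>) {0..}"
    unfolding h_def by (rule Gamma_integral_real[OF assms])
  have "norm (f k u) \<le> h u" for k u
    using S0[of k] gamma_kernel_le[of u] by (auto simp: f_def h_def gamma_kernel_def)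
  moreover have "(\<lambda>k. f k u) \<longlonglongrightarrow> h u" if "u \<in> {0..}" for u
  proof (cases "u = 0")
    case True
    have "f k u = 0" for k
      using True S0[of k] by (simp add: f_def)
    then show ?thesis
      using True by (simp add: h_def)
  next
    case False
    with that have "0 < u" by simp
    then have "eventually (\<lambda>k. S k / 2 \<le> u) sequentially"
      using order_tendstoD(2)[OF S, of "2 * u"] by (auto elim: eventually_mono)
    then have "eventually (\<lambda>k. gamma_kernel \<nu> (S k) u = f k u) sequentially"
      by (auto simp: f_def elim: eventually_mono)
    with gamma_kernel_tendsto[OF \<open>0 < u\<close> S] show ?thesis
      unfolding h_def by (rule Lim_transform_eventually)
  qed
  ultimately have "(\<lambda>k. integral {0..} (f k)) \<longlonglongrightarrow> integral {0..} h"
    using has_integral_integrable[OF f] has_integral_integrable[OF h]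
    by (intro dominated_convergence(2)[where h = h]) auto
  then show "(\<lambda>k. (S k / 2) powr \<nu> * besselK_halfline \<nu> (S k)) \<longlonglongrightarrow> Gamma \<nu>"
    using integral_unique[OF f] integral_unique[OF h] by simp
qed simp

lemma tendsto_besselK_halfline_neg_at_0:
  assumes "0 < \<nu>"
  shows "((\<lambda>x. (x / 2) powr \<nu> * besselK_halfline (- \<nu>) x) \<longlongrightarrow> 0) (at_right 0)"
proof (rule Lim_null_comparison)
  have exp: "((\<lambda>t. exp (- \<nu> * t)) has_integral 1 / \<nu>) {0..}"
    using has_integral_exp_minus_to_infinity[OF assms, of 0] by simp
  have "norm ((x / 2) powr \<nu> * besselK_halfline (- \<nu>) x) \<le> (x / 2) powr \<nu> / \<nu>" if "0 < x" for x
  proof -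
    have int: "(\<lambda>t. exp (- x * cosh t) * exp (- \<nu> * t)) integrable_on {0..}"
      using besselK_halfline_integrable[OF that, of "- \<nu>"] by simp
    have "exp (- x * cosh t) * exp (- \<nu> * t) \<le> exp (- \<nu> * t)" for t
    proof (rule mult_left_le_one_le)
      show "exp (- x * cosh t) \<le> 1"
        using that by (simp add: zero_le_mult_iff)
    qed simp_all
    then have "besselK_halfline (- \<nu>) x \<le> 1 / \<nu>"
      unfolding besselK_halfline_def integral_unique[OF exp, symmetric]
      using int has_integral_integrable[OF exp] by (intro integral_le) simp_all
    moreover have "0 \<le> besselK_halfline (- \<nu>) x"
      unfolding besselK_halfline_def using int by (intro integral_nonneg) simp_all
    ultimately show ?thesis
      using mult_left_mono[of _ "1 / \<nu>" "(x / 2) powr \<nu>"] by simp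
  qed
  then show "\<forall>\<^sub>F x in at_right 0. norm ((x / 2) powr \<nu> * besselK_halfline (- \<nu>) x) \<le> (x / 2) powr \<nu> / \<nu>"
    by (rule eventually_at_right_less[THEN eventually_mono])
  show "((\<lambda>x. (x / 2) powr \<nu> / \<nu>) \<longlongrightarrow> 0) (at_right 0)"
    using assms by real_asymp
qed

lemma tendsto_besselK_at_0:
  assumes "0 < \<nu>"
  shows "((\<lambda>x. of_real ((x / 2) powr \<nu>) * besselK \<nu> (of_real x)) \<longlongrightarrow> of_real (Gamma \<nu> / 2)) (at_right 0)"
proof (rule Lim_transform_eventually)
  show "((\<lambda>x. of_real (((x / 2) powr \<nu> * besselK_halfline \<nu> x + (x / 2) powr \<nu> * besselK_halfline (- \<nu>) x) / 2))
      \<longlongrightarrow> (of_real (Gamma \<nu> / 2) :: complex)) (at_right 0)"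
    using tendsto_besselK_halfline_at_0[OF assms] tendsto_besselK_halfline_neg_at_0[OF assms]
    by (intro tendsto_of_real) (auto intro: tendsto_eq_intros)
  show "\<forall>\<^sub>F x in at_right 0. of_real (((x / 2) powr \<nu> * besselK_halfline \<nu> x
      + (x / 2) powr \<nu> * besselK_halfline (- \<nu>) x) / 2) = of_real ((x / 2) powr \<nu>) * besselK \<nu> (of_real x)"
    by (rule eventually_at_right_less[THEN eventually_mono]) (simp add: besselK_of_real field_simps)
qed

section \<open>Wronskians and the connection formula\<close>

text \<open>First-order form of the modified Bessel equation of order \<open>\<mu>\<close>: it is solved by
  \<open>(u, v) = (I \<mu>, I (\<mu> - 1))\<close>, by \<open>(I (-\<mu>), I (1 - \<mu>))\<close> and by \<open>(K \<mu>, - K (\<mu> - 1))\<close>.\<close>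
definition modified_bessel_system :: "real \<Rightarrow> (complex \<Rightarrow> complex) \<Rightarrow> (complex \<Rightarrow> complex) \<Rightarrow> bool" where
  "modified_bessel_system \<mu> u v \<longleftrightarrow> (\<forall>w. 0 < Re w \<longrightarrow>
      (u has_field_derivative v w - of_real \<mu> / w * u w) (at w) \<and>
      (v has_field_derivative u w + of_real (\<mu> - 1) / w * v w) (at w))"

lemma modified_bessel_system_besselI: "modified_bessel_system \<mu> (besselI \<mu>) (besselI (\<mu> - 1))"
  unfolding modified_bessel_system_def
  using besselI_has_field_derivative_lower besselI_has_field_derivative_raise[of _ "\<mu> - 1"] by simp

lemma modified_bessel_system_besselI_uminus: "modified_bessel_system \<mu> (besselI (- \<mu>)) (besselI (1 - \<mu>))"
proof -
  have "(of_real (1 - \<mu>) :: complex) = - of_real (\<mu> - 1)"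
    by simp
  then have "of_real (1 - \<mu>) / w * besselI (1 - \<mu>) w = - (of_real (\<mu> - 1) / w * besselI (1 - \<mu>) w)" for w
    by (simp only: minus_divide_left[symmetric] mult_minus_left)
  then show ?thesis
    unfolding modified_bessel_system_def
    using besselI_has_field_derivative_raise[of _ "- \<mu>"] besselI_has_field_derivative_lower[of _ "1 - \<mu>"]
    by (simp add: algebra_simps)
qed

lemma modified_bessel_system_besselK: "modified_bessel_system \<mu> (besselK \<mu>) (\<lambda>w. - besselK (\<mu> - 1) w)"
  unfolding modified_bessel_system_def
proof (intro allI impI conjI)
  fix w :: complex
  assume "0 < Re w"
  show "(besselK \<mu> has_field_derivative - besselK (\<mu> - 1) w - of_real \<mu> / w * besselK \<mu> w) (at w)"
    by (rule besselK_has_field_derivative_lower[OF \<open>0 < Re w\<close>])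
  show "((\<lambda>w. - besselK (\<mu> - 1) w) has_field_derivative besselK \<mu> w + of_real (\<mu> - 1) / w * - besselK (\<mu> - 1) w) (at w)"
    using DERIV_minus[OF besselK_has_field_derivative_raise[OF \<open>0 < Re w\<close>, of "\<mu> - 1"]] by simp
qed

lemma wronskian_constant:
  assumes "modified_bessel_system \<mu> u\<^sub>1 v\<^sub>1" and "modified_bessel_system \<mu> u\<^sub>2 v\<^sub>2"
  obtains c where "\<And>w. 0 < Re w \<Longrightarrow> w * (u\<^sub>1 w * v\<^sub>2 w - v\<^sub>1 w * u\<^sub>2 w) = c"
proof -
  have "\<exists>c. \<forall>w\<in>{w. 0 < Re w}. w * (u\<^sub>1 w * v\<^sub>2 w - v\<^sub>1 w * u\<^sub>2 w) = c"
  proof (rule has_field_derivative_zero_constant)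
    show "convex {w. 0 < Re w}" by (rule convex_halfspace_Re_gt)
    fix w
    assume "w \<in> {w. 0 < Re w}"
    then have "0 < Re w" "w \<noteq> 0" by auto
    note d = assms[unfolded modified_bessel_system_def, THEN spec, THEN mp, OF \<open>0 < Re w\<close>]
    have "((\<lambda>w. w * (u\<^sub>1 w * v\<^sub>2 w - v\<^sub>1 w * u\<^sub>2 w)) has_field_derivative
        1 * (u\<^sub>1 w * v\<^sub>2 w - v\<^sub>1 w * u\<^sub>2 w)
        + w * ((v\<^sub>1 w - of_real \<mu> / w * u\<^sub>1 w) * v\<^sub>2 w + u\<^sub>1 w * (u\<^sub>2 w + of_real (\<mu> - 1) / w * v\<^sub>2 w)
             - ((u\<^sub>1 w + of_real (\<mu> - 1) / w * v\<^sub>1 w) * u\<^sub>2 w + v\<^sub>1 w * (v\<^sub>2 w - of_real \<mu> / w * u\<^sub>2 w))))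
        (at w)"
      using d by (intro derivative_eq_intros) auto
    moreover have "1 * (u\<^sub>1 w * v\<^sub>2 w - v\<^sub>1 w * u\<^sub>2 w)
        + w * ((v\<^sub>1 w - of_real \<mu> / w * u\<^sub>1 w) * v\<^sub>2 w + u\<^sub>1 w * (u\<^sub>2 w + of_real (\<mu> - 1) / w * v\<^sub>2 w)
             - ((u\<^sub>1 w + of_real (\<mu> - 1) / w * v\<^sub>1 w) * u\<^sub>2 w + v\<^sub>1 w * (v\<^sub>2 w - of_real \<mu> / w * u\<^sub>2 w))) = 0"
      using \<open>w \<noteq> 0\<close> by (simp add: field_simps)
    ultimately show "((\<lambda>w. w * (u\<^sub>1 w * v\<^sub>2 w - v\<^sub>1 w * u\<^sub>2 w)) has_field_derivative 0) (at w within {w. 0 < Re w})"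
      by (simp add: has_field_derivative_at_within)
  qed
  then show ?thesis using that by blast
qed

lemma constant_eq_limit_at_0:
  fixes f :: "complex \<Rightarrow> complex"
  assumes "\<And>w. 0 < Re w \<Longrightarrow> f w = c" and "((\<lambda>x. f (of_real x)) \<longlongrightarrow> L) (at_right 0)"
  shows "c = L"
proof (rule tendsto_unique[OF trivial_limit_at_right_real])
  show "((\<lambda>x. f (of_real x)) \<longlongrightarrow> c) (at_right 0)"
    by (rule Lim_transform_eventually[OF tendsto_const])
      (auto intro: eventually_at_right_less[THEN eventually_mono] simp: assms(1))
qed fact

lemma tendsto_powr_product_at_0:
  fixes F G :: "real \<Rightarrow> complex"
  assumes "(F \<longlongrightarrow> A) (at_right 0)" and "(G \<longlongrightarrow> B) (at_right 0)" and "0 \<le> a + b + 1"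
  shows "((\<lambda>x. of_real x * ((of_real ((x / 2) powr a) * F x) * (of_real ((x / 2) powr b) * G x)))
      \<longlongrightarrow> (if a + b + 1 = 0 then 2 * (A * B) else 0)) (at_right 0)"
proof (rule Lim_transform_eventually)
  have "((\<lambda>x. 2 * (x / 2) powr (a + b + 1)) \<longlongrightarrow> (if a + b + 1 = 0 then 2 else 0)) (at_right 0)"
  proof (cases "a + b + 1 = 0")
    case True
    show ?thesis
      by (rule Lim_transform_eventually[OF tendsto_const])
        (auto intro: eventually_at_right_less[THEN eventually_mono] simp: True)
  next
    case False
    with assms(3) have "0 < a + b + 1" by simp
    then show ?thesis using False by simp real_asymp
  qed
  from tendsto_mult[OF tendsto_of_real[OF this] tendsto_mult[OF assms(1,2)]]
  show "((\<lambda>x. of_real (2 * (x / 2) powr (a + b + 1)) * (F x * G x))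
      \<longlongrightarrow> (if a + b + 1 = 0 then 2 * (A * B) else 0)) (at_right 0)"
    by (rule tendsto_eq_rhs) simp
  show "\<forall>\<^sub>F x in at_right 0. of_real (2 * (x / 2) powr (a + b + 1)) * (F x * G x)
      = of_real x * ((of_real ((x / 2) powr a) * F x) * (of_real ((x / 2) powr b) * G x))"
  proof (rule eventually_at_right_less[THEN eventually_mono])
    fix x :: real
    assume "0 < x"
    then have "2 * (x / 2) powr (a + b + 1) = x * ((x / 2) powr a * (x / 2) powr b)"
      by (simp add: powr_add)
    then show "of_real (2 * (x / 2) powr (a + b + 1)) * (F x * G x)
        = of_real x * ((of_real ((x / 2) powr a) * F x) * (of_real ((x / 2) powr b) * G x))"
      by (simp add: mult_ac flip: of_real_mult)
  qed
qed

lemma besselI_of_real: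
  assumes "0 < x"
  shows "besselI \<nu> (of_real x) = of_real ((x / 2) powr \<nu>) * bessel_series (of_real \<nu>) (of_real ((x / 2) ^ 2))"
proof -
  have "(of_real x / 2 :: complex) = of_real (x / 2)"
    by simp
  moreover have "(of_real (x / 2) :: complex) powr of_real \<nu> = of_real ((x / 2) powr \<nu>)"
    by (rule powr_of_real) (use assms in simp)
  ultimately show ?thesis
    unfolding besselI_def by (simp add: power_divide)
qed

lemma tendsto_bessel_series_at_0:
  "((\<lambda>x. bessel_series m (of_real ((x / 2) ^ 2))) \<longlongrightarrow> rGamma (m + 1)) (at_right 0)"
proof -
  have "((\<lambda>x::real. (x / 2) ^ 2) \<longlongrightarrow> 0) (at_right 0)"
    by real_asymp
  from tendsto_of_real[OF this, where 'a = complex]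
  have "((\<lambda>x::real. of_real ((x / 2) ^ 2) :: complex) \<longlongrightarrow> 0) (at_right 0)"
    by simp
  moreover have "isCont (bessel_series m) 0"
    using continuous_on_bessel_series[of UNIV] by (simp add: continuous_on_eq_continuous_at)
  ultimately show ?thesis
    unfolding bessel_series_0[symmetric] by (rule isCont_tendsto_compose[rotated])
qed

lemma tendsto_besselI_product_at_0:
  assumes "0 \<le> a + b + 1"
  shows "((\<lambda>x. of_real x * (besselI a (of_real x) * besselI b (of_real x)))
      \<longlongrightarrow> (if a + b + 1 = 0 then 2 * (rGamma (of_real a + 1) * rGamma (of_real b + 1)) else 0)) (at_right 0)"
proof (rule Lim_transform_eventually)
  show "((\<lambda>x. of_real x * ((of_real ((x / 2) powr a) * bessel_series (of_real a) (of_real ((x / 2) ^ 2)))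
      * (of_real ((x / 2) powr b) * bessel_series (of_real b) (of_real ((x / 2) ^ 2)))))
      \<longlongrightarrow> (if a + b + 1 = 0 then 2 * (rGamma (of_real a + 1) * rGamma (of_real b + 1)) else 0)) (at_right 0)"
    by (rule tendsto_powr_product_at_0[OF tendsto_bessel_series_at_0 tendsto_bessel_series_at_0 assms])
  show "\<forall>\<^sub>F x in at_right 0. of_real x * ((of_real ((x / 2) powr a) * bessel_series (of_real a) (of_real ((x / 2) ^ 2)))
      * (of_real ((x / 2) powr b) * bessel_series (of_real b) (of_real ((x / 2) ^ 2))))
      = of_real x * (besselI a (of_real x) * besselI b (of_real x))"
    by (rule eventually_at_right_less[THEN eventually_mono]) (simp add: besselI_of_real)
qed

lemma tendsto_besselK_besselI_product_at_0:
  assumes "0 < a" and "0 \<le> b - a + 1"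
  shows "((\<lambda>x. of_real x * (besselK a (of_real x) * besselI b (of_real x)))
      \<longlongrightarrow> (if b - a + 1 = 0 then of_real (Gamma a) * rGamma (of_real b + 1) else 0)) (at_right 0)"
proof (rule Lim_transform_eventually)
  have "((\<lambda>x. of_real x * ((of_real ((x / 2) powr - a) * (of_real ((x / 2) powr a) * besselK a (of_real x)))
      * (of_real ((x / 2) powr b) * bessel_series (of_real b) (of_real ((x / 2) ^ 2)))))
      \<longlongrightarrow> (if - a + b + 1 = 0 then 2 * (of_real (Gamma a / 2) * rGamma (of_real b + 1)) else 0)) (at_right 0)"
    using assms
    by (intro tendsto_powr_product_at_0 tendsto_besselK_at_0 tendsto_bessel_series_at_0) simp_all
  then show "((\<lambda>x. of_real x * ((of_real ((x / 2) powr - a) * (of_real ((x / 2) powr a) * besselK a (of_real x)))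
      * (of_real ((x / 2) powr b) * bessel_series (of_real b) (of_real ((x / 2) ^ 2)))))
      \<longlongrightarrow> (if b - a + 1 = 0 then of_real (Gamma a) * rGamma (of_real b + 1) else 0)) (at_right 0)"
    by (rule tendsto_eq_rhs) simp
  show "\<forall>\<^sub>F x in at_right 0. of_real x * ((of_real ((x / 2) powr - a) * (of_real ((x / 2) powr a) * besselK a (of_real x)))
      * (of_real ((x / 2) powr b) * bessel_series (of_real b) (of_real ((x / 2) ^ 2))))
      = of_real x * (besselK a (of_real x) * besselI b (of_real x))"
  proof (rule eventually_at_right_less[THEN eventually_mono])
    fix x :: real
    assume "0 < x"
    then have "(of_real ((x / 2) powr - a) * of_real ((x / 2) powr a) :: complex) = 1"
      by (simp add: powr_minus flip: of_real_mult)
    then show "of_real x * ((of_real ((x / 2) powr - a) * (of_real ((x / 2) powr a) * besselK a (of_real x)))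
        * (of_real ((x / 2) powr b) * bessel_series (of_real b) (of_real ((x / 2) ^ 2))))
        = of_real x * (besselK a (of_real x) * besselI b (of_real x))"
      using \<open>0 < x\<close> by (simp add: besselI_of_real mult.assoc[symmetric])
  qed
qed

lemma wronskian_besselI:
  assumes "0 < Re w"
  shows "w * (besselI \<mu> w * besselI (1 - \<mu>) w - besselI (\<mu> - 1) w * besselI (- \<mu>) w)
      = - of_real (2 / pi * sin (\<mu> * pi))"
proof -
  obtain c where c: "\<And>w. 0 < Re w \<Longrightarrow> w * (besselI \<mu> w * besselI (1 - \<mu>) w - besselI (\<mu> - 1) w * besselI (- \<mu>) w) = c"
    using wronskian_constant[OF modified_bessel_system_besselI modified_bessel_system_besselI_uminus] by blast
  have "c = 0 - 2 * (rGamma (of_real (\<mu> - 1) + 1) * rGamma (of_real (- \<mu>) + 1))"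
  proof (rule constant_eq_limit_at_0[OF c])
    show "((\<lambda>x. of_real x * (besselI \<mu> (of_real x) * besselI (1 - \<mu>) (of_real x)
        - besselI (\<mu> - 1) (of_real x) * besselI (- \<mu>) (of_real x)))
        \<longlongrightarrow> 0 - 2 * (rGamma (of_real (\<mu> - 1) + 1) * rGamma (of_real (- \<mu>) + 1))) (at_right 0)"
      using tendsto_diff[OF tendsto_besselI_product_at_0[of \<mu> "1 - \<mu>"] tendsto_besselI_product_at_0[of "\<mu> - 1" "- \<mu>"]]
      by (simp add: right_diff_distrib)
  qed
  also have "\<dots> = - of_real (2 / pi * sin (\<mu> * pi))"
  proof -
    have "rGamma (of_real \<mu>) * rGamma (1 - of_real \<mu>) = (of_real (sin (\<mu> * pi) / pi) :: complex)"
      using rGamma_reflection_complex[of "of_real \<mu>"] by (simp add: sin_of_real mult.commute flip: of_real_mult)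
    then show ?thesis by simp
  qed
  finally show ?thesis using c[OF assms] by simp
qed

lemma Gamma_mult_rGamma_of_real:
  assumes "0 < x"
  shows "of_real (Gamma x) * rGamma (of_real x :: complex) = 1"
proof -
  have "Gamma x * rGamma x = 1"
    using Gamma_real_pos[OF assms] by (simp add: rGamma_inverse_Gamma)
  then show ?thesis
    by (simp add: rGamma_complex_of_real flip: of_real_mult)
qed

lemma wronskian_besselK_besselI:
  assumes "0 < \<mu>" and "\<mu> < 1" and "0 < Re w"
  shows "w * (besselK \<mu> w * besselI (\<mu> - 1) w + besselK (\<mu> - 1) w * besselI \<mu> w) = 1"
proof -
  obtain c where c: "\<And>w. 0 < Re w \<Longrightarrow> w * (besselK \<mu> w * besselI (\<mu> - 1) w - - besselK (\<mu> - 1) w * besselI \<mu> w) = c"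
    using wronskian_constant[OF modified_bessel_system_besselK modified_bessel_system_besselI] by blast
  have "c = of_real (Gamma \<mu>) * rGamma (of_real (\<mu> - 1) + 1) + 0"
  proof (rule constant_eq_limit_at_0[OF c])
    have "besselK (\<mu> - 1) = besselK (1 - \<mu>)"
      using besselK_even[of "1 - \<mu>"] by auto
    with tendsto_add[OF tendsto_besselK_besselI_product_at_0[of \<mu> "\<mu> - 1"]
        tendsto_besselK_besselI_product_at_0[of "1 - \<mu>" \<mu>]] assms
    show "((\<lambda>x. of_real x * (besselK \<mu> (of_real x) * besselI (\<mu> - 1) (of_real x)
        - - besselK (\<mu> - 1) (of_real x) * besselI \<mu> (of_real x)))
        \<longlongrightarrow> of_real (Gamma \<mu>) * rGamma (of_real (\<mu> - 1) + 1) + 0) (at_right 0)"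
      by (simp add: distrib_left)
  qed
  also have "\<dots> = 1"
    using Gamma_mult_rGamma_of_real[OF assms(1)] by simp
  finally show ?thesis using c[OF assms(3)] by simp
qed

text \<open>Eliminating \<open>K (\<mu> - 1)\<close> from the Wronskians of \<open>K\<close> with \<open>I \<mu>\<close> and with \<open>I (-\<mu>)\<close> (the
  latter being the former at order \<open>1 - \<mu>\<close>) leaves \<open>K \<mu>\<close> times the Wronskian of \<open>I \<mu>\<close> and
  \<open>I (-\<mu>)\<close>.\<close>
lemma sin_mult_besselK_eq_on_unit_interval:
  assumes "0 < \<mu>" and "\<mu> < 1" and "0 < Re w"
  shows "of_real (sin (\<mu> * pi)) * besselK \<mu> w = of_real (pi / 2) * (besselI (- \<mu>) w - besselI \<mu> w)"
proof -
  define K where "K = besselK \<mu> w"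
  define K' where "K' = besselK (\<mu> - 1) w"
  define I where "I \<alpha> = besselI \<alpha> w" for \<alpha>
  have "w * (K * I (\<mu> - 1) + K' * I \<mu>) = 1"
    unfolding K_def K'_def I_def by (rule wronskian_besselK_besselI[OF assms])
  moreover have "w * (K' * I (- \<mu>) + K * I (1 - \<mu>)) = 1"
    using wronskian_besselK_besselI[of "1 - \<mu>"] besselK_even[of "1 - \<mu>"] besselK_even[of \<mu>] assms
    unfolding K_def K'_def I_def by simp
  moreover have "w * (I \<mu> * I (1 - \<mu>) - I (\<mu> - 1) * I (- \<mu>)) = - of_real (2 / pi * sin (\<mu> * pi))"
    unfolding I_def by (rule wronskian_besselI[OF assms(3)])
  moreover have "K * (w * (I \<mu> * I (1 - \<mu>) - I (\<mu> - 1) * I (- \<mu>)))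
      = I \<mu> * (w * (K' * I (- \<mu>) + K * I (1 - \<mu>))) - I (- \<mu>) * (w * (K * I (\<mu> - 1) + K' * I \<mu>))"
    by (simp add: algebra_simps)
  ultimately have "K * - of_real (2 / pi * sin (\<mu> * pi)) = I \<mu> - I (- \<mu>)"
    by simp
  then show ?thesis
    unfolding K_def I_def by (simp add: field_simps)
qed

lemma odd_three_term_recurrence_eq_0:
  fixes f :: "real \<Rightarrow> 'a::field_char_0"
  assumes odd: "\<And>\<nu>. f (- \<nu>) = - f \<nu>"
    and recurrence: "\<And>\<nu>. f (\<nu> + 1) = f (\<nu> - 1) - c \<nu> * f \<nu>"
    and unit_interval: "\<And>\<nu>. 0 < \<nu> \<Longrightarrow> \<nu> < 1 \<Longrightarrow> f \<nu> = 0"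
  shows "f \<nu> = 0"
proof -
  have neg_self: "a = - a \<Longrightarrow> a = 0" for a :: 'a
    by (simp add: eq_neg_iff_add_eq_0 flip: mult_2)
  have "f 0 = 0"
    using odd[of 0] neg_self by simp
  moreover have "f 1 = 0"
    using recurrence[of 0] odd[of 1] \<open>f 0 = 0\<close> neg_self by simp
  moreover have "f (- 1) = 0"
    using odd[of 1] \<open>f 1 = 0\<close> by simp
  ultimately have small: "f \<nu> = 0" if "\<bar>\<nu>\<bar> \<le> 1" for \<nu>
  proof (cases "\<nu> = - 1 \<or> \<nu> = 0 \<or> \<nu> = 1")
    case False
    with that have "0 < \<nu> \<and> \<nu> < 1 \<or> 0 < - \<nu> \<and> - \<nu> < 1"
      by arith
    then show ?thesis
      using unit_interval odd[of \<nu>] unit_interval[of "- \<nu>"] by auto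
  qed (use \<open>f 0 = 0\<close> \<open>f 1 = 0\<close> \<open>f (- 1) = 0\<close> in auto)
  have step: "f (\<nu>\<^sub>0 + real n - 1) = 0 \<and> f (\<nu>\<^sub>0 + real n) = 0" if "0 \<le> \<nu>\<^sub>0" "\<nu>\<^sub>0 < 1" for \<nu>\<^sub>0 n
  proof (induction n)
    case 0
    show ?case using that by (auto intro!: small)
  next
    case (Suc n)
    then show ?case
      using recurrence[of "\<nu>\<^sub>0 + real n"] by (simp add: algebra_simps)
  qed
  have "f \<nu> = 0" if "0 \<le> \<nu>" for \<nu>
    using step[of "\<nu> - of_int \<lfloor>\<nu>\<rfloor>" "nat \<lfloor>\<nu>\<rfloor>"] that by simp linarith
  then show ?thesis
    using odd[of \<nu>] by (cases "0 \<le> \<nu>") auto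
qed

theorem sin_mult_besselK_eq:
  assumes "0 < Re w"
  shows "of_real (sin (\<nu> * pi)) * besselK \<nu> w = of_real (pi / 2) * (besselI (- \<nu>) w - besselI \<nu> w)"
proof -
  define f where "f \<nu> = of_real (sin (\<nu> * pi)) * besselK \<nu> w - of_real (pi / 2) * (besselI (- \<nu>) w - besselI \<nu> w)"
    for \<nu>
  have "w \<noteq> 0" using assms by auto
  have "f \<nu> = 0"
  proof (rule odd_three_term_recurrence_eq_0[where c = "\<lambda>\<nu>. 2 * of_real \<nu> / w"])
    show "f (- \<nu>) = - f \<nu>" for \<nu>
      unfolding f_def by (simp add: besselK_even algebra_simps)
    show "f \<nu> = 0" if "0 < \<nu>" "\<nu> < 1" for \<nu>
      using sin_mult_besselK_eq_on_unit_interval[OF that assms] unfolding f_def by simp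
    show "f (\<nu> + 1) = f (\<nu> - 1) - 2 * of_real \<nu> / w * f \<nu>" for \<nu>
    proof -
      have "sin ((\<nu> + 1) * pi) = - sin (\<nu> * pi)" "sin ((\<nu> - 1) * pi) = - sin (\<nu> * pi)"
        by (simp_all add: distrib_right left_diff_distrib sin_add sin_diff)
      moreover have "besselK (\<nu> + 1) w = besselK (\<nu> - 1) w + 2 * of_real \<nu> / w * besselK \<nu> w"
        using besselK_recurrence[OF assms, of \<nu>] \<open>w \<noteq> 0\<close> by (simp add: field_simps)
      moreover have "besselI (\<nu> + 1) w = besselI (\<nu> - 1) w - 2 * of_real \<nu> / w * besselI \<nu> w"
        using besselI_recurrence[OF \<open>w \<noteq> 0\<close>, of \<nu>] by simp
      moreover have "besselI (- (\<nu> + 1)) w = besselI (- (\<nu> - 1)) w - 2 * of_real \<nu> / w * besselI (- \<nu>) w"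
      proof -
        have "- (\<nu> + 1) = - \<nu> - 1" "- (\<nu> - 1) = - \<nu> + 1"
          by simp_all
        with besselI_recurrence[OF \<open>w \<noteq> 0\<close>, of "- \<nu>"] show ?thesis
          by (simp only:) simp
      qed
      ultimately show ?thesis
        unfolding f_def by (simp only:) (simp add: algebra_simps)
    qed
  qed
  then show ?thesis
    unfolding f_def by simp
qed

section \<open>Kelvin functions\<close>

lemma Re_exp_quarter_pi_pos:
  assumes "0 < x"
  shows "0 < Re (exp (\<i> * of_real (pi / 4)) * of_real x)"
proof -
  have "0 < cos (pi / 4)"
    by (rule cos_gt_zero) (use pi_gt_zero in auto)
  then show ?thesis
    using assms by (simp add: Re_exp)
qed

lemma kelvin_reflection:
  assumes "0 < x"
  shows "exp (\<i> * of_real (pi * \<mu>)) * besselJ \<mu> (exp (- \<i> * of_real (pi / 4)) * of_real x)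
      = besselJ (- \<mu>) (exp (- \<i> * of_real (pi / 4)) * of_real x)
        - of_real (2 / pi * sin (\<mu> * pi)) * exp (\<i> * of_real (pi * \<mu> / 2))
          * besselK \<mu> (exp (\<i> * of_real (pi / 4)) * of_real x)"
proof -
  define z where "z = exp (- \<i> * of_real (pi / 4)) * of_real x"
  define w where "w = exp (\<i> * of_real (pi / 4)) * of_real x"
  define E where "E \<mu> = exp (\<i> * of_real (pi * \<mu> / 2))" for \<mu>
  have EE: "E \<mu> * E (- \<mu>) = 1" "E \<mu> * E \<mu> = exp (\<i> * of_real (pi * \<mu>))"
    unfolding E_def by (simp_all add: exp_add[symmetric])
  have sK: "of_real (sin (\<mu> * pi)) * besselK \<mu> w = of_real (pi / 2) * (E (- \<mu>) * besselJ (- \<mu>) z - E \<mu> * besselJ \<mu> z)"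
    using sin_mult_besselK_eq[OF Re_exp_quarter_pi_pos[OF assms], of \<mu>]
    unfolding w_def z_def E_def besselI_exp_quarter_pi[OF assms] by simp
  have "(of_real (2 / pi) :: complex) * of_real (pi / 2) = 1"
    by (simp flip: of_real_mult)
  then have "besselJ (- \<mu>) z - of_real (2 / pi) * E \<mu> * (of_real (sin (\<mu> * pi)) * besselK \<mu> w)
      = besselJ (- \<mu>) z - (E \<mu> * E (- \<mu>)) * besselJ (- \<mu>) z + (E \<mu> * E \<mu>) * besselJ \<mu> z"
    unfolding sK by (simp add: algebra_simps)
  then have "exp (\<i> * of_real (pi * \<mu>)) * besselJ \<mu> z
      = besselJ (- \<mu>) z - of_real (2 / pi) * E \<mu> * (of_real (sin (\<mu> * pi)) * besselK \<mu> w)"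
    unfolding EE by simp
  then show ?thesis
    unfolding z_def w_def E_def by (simp add: mult_ac)
qed

lemma has_vector_derivative_kelvin:
  assumes "0 < x"
  shows "((\<lambda>\<mu>. exp (\<i> * of_real (pi * \<mu>)) * besselJ \<mu> (exp (- \<i> * of_real (pi / 4)) * of_real x))
      has_vector_derivative
        - besselJ_dorder (- \<mu>) (exp (- \<i> * of_real (pi / 4)) * of_real x)
        - exp (\<i> * of_real (pi * \<mu> / 2))
          * ((\<i> * of_real (sin (\<mu> * pi)) + 2 * of_real (cos (\<mu> * pi)))
               * besselK \<mu> (exp (\<i> * of_real (pi / 4)) * of_real x)
             + of_real (2 / pi * sin (\<mu> * pi)) * besselK_dorder \<mu> (exp (\<i> * of_real (pi / 4)) * of_real x)))
      (at \<mu>)"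
proof -
  define z where "z = exp (- \<i> * of_real (pi / 4)) * of_real x"
  define w where "w = exp (\<i> * of_real (pi / 4)) * of_real x"
  define E where "E \<mu> = exp (\<i> * of_real (pi * \<mu> / 2))" for \<mu>
  have "((\<lambda>\<mu>. - \<mu>) has_vector_derivative -1) (at \<mu>)"
    by (auto intro!: derivative_eq_intros simp flip: has_real_derivative_iff_has_vector_derivative)
  from vector_diff_chain_at[OF this has_vector_derivative_besselJ_order]
  have J: "((\<lambda>\<mu>. besselJ (- \<mu>) z) has_vector_derivative - besselJ_dorder (- \<mu>) z) (at \<mu>)"
    by (simp add: o_def)
  have "((\<lambda>\<mu>. 2 / pi * sin (\<mu> * pi)) has_real_derivative 2 * cos (\<mu> * pi)) (at \<mu>)"
    by (auto intro!: derivative_eq_intros)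
  from has_vector_derivative_of_real[OF this]
  have S: "((\<lambda>\<mu>. of_real (2 / pi * sin (\<mu> * pi)) :: complex) has_vector_derivative of_real (2 * cos (\<mu> * pi)))
      (at \<mu>)" .
  have "((\<lambda>z. exp (\<i> * of_real pi * z / 2)) has_field_derivative
      \<i> * of_real pi / 2 * exp (\<i> * of_real pi * of_real \<mu> / 2)) (at (of_real \<mu>))"
    by (auto intro!: derivative_eq_intros)
  from has_vector_derivative_real_field[OF this]
  have E: "(E has_vector_derivative \<i> * of_real pi / 2 * E \<mu>) (at \<mu>)"
    unfolding E_def[abs_def] by (simp add: mult.assoc)
  have K: "((\<lambda>\<mu>. besselK \<mu> w) has_vector_derivative besselK_dorder \<mu> w) (at \<mu>)"
    unfolding w_def by (rule has_vector_derivative_besselK_order[OF Re_exp_quarter_pi_pos[OF assms]])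
  have "((\<lambda>\<mu>. besselJ (- \<mu>) z - of_real (2 / pi * sin (\<mu> * pi)) * E \<mu> * besselK \<mu> w) has_vector_derivative
      - besselJ_dorder (- \<mu>) z
      - (of_real (2 / pi * sin (\<mu> * pi)) * E \<mu> * besselK_dorder \<mu> w
         + (of_real (2 / pi * sin (\<mu> * pi)) * (\<i> * of_real pi / 2 * E \<mu>) + of_real (2 * cos (\<mu> * pi)) * E \<mu>)
           * besselK \<mu> w)) (at \<mu>)"
    by (intro has_vector_derivative_diff J has_vector_derivative_mult S E K)
  moreover have "(\<lambda>\<mu>. besselJ (- \<mu>) z - of_real (2 / pi * sin (\<mu> * pi)) * E \<mu> * besselK \<mu> w)
      = (\<lambda>\<mu>. exp (\<i> * of_real (pi * \<mu>)) * besselJ \<mu> z)"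
    unfolding z_def w_def E_def by (intro ext) (rule kelvin_reflection[OF assms, symmetric])
  ultimately show ?thesis
    unfolding z_def[symmetric] w_def[symmetric] E_def[symmetric] by (simp add: algebra_simps)
qed

theorem mainTheorem2:
  fixes x \<nu> :: real
  assumes "x > 0" and "\<nu> > 0"
  shows "((\<lambda>\<mu>. ber \<mu> x) has_real_derivative
           - Re (exp (- \<i> * of_real (pi * \<nu> / 2)) *
                   ((exp (- \<i> * of_real (pi * \<nu>)) + of_real (cos (pi * \<nu>)))
                       * besselK \<nu> (exp (\<i> * of_real (pi / 4)) * of_real x)
                    + of_real (2 / pi * sin (pi * \<nu>))
                       * besselK_dorder \<nu> (exp (\<i> * of_real (pi / 4)) * of_real x))
                 + besselJ_dorder \<nu> (exp (- \<i> * of_real (pi / 4)) * of_real x)))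
          (at (- \<nu>))
       \<and> ((\<lambda>\<mu>. bei \<mu> x) has_real_derivative
           - Im (exp (- \<i> * of_real (pi * \<nu> / 2)) *
                   ((exp (- \<i> * of_real (pi * \<nu>)) + of_real (cos (pi * \<nu>)))
                       * besselK \<nu> (exp (\<i> * of_real (pi / 4)) * of_real x)
                    + of_real (2 / pi * sin (pi * \<nu>))
                       * besselK_dorder \<nu> (exp (\<i> * of_real (pi / 4)) * of_real x))
                 + besselJ_dorder \<nu> (exp (- \<i> * of_real (pi / 4)) * of_real x)))
          (at (- \<nu>))"
proof -
  define z where "z = exp (- \<i> * of_real (pi / 4)) * of_real x"
  define w where "w = exp (\<i> * of_real (pi / 4)) * of_real x"
  define T where "T = exp (- \<i> * of_real (pi * \<nu> / 2)) *
      ((exp (- \<i> * of_real (pi * \<nu>)) + of_real (cos (pi * \<nu>))) * besselK \<nu> w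
       + of_real (2 / pi * sin (pi * \<nu>)) * besselK_dorder \<nu> w) + besselJ_dorder \<nu> z"
  have "0 < Re w"
    unfolding w_def by (rule Re_exp_quarter_pi_pos[OF assms(1)])
  have "exp (- \<i> * of_real (pi * \<nu>)) = of_real (cos (pi * \<nu>)) - \<i> * of_real (sin (pi * \<nu>))"
    by (simp add: exp_eq_polar complex_eq_iff)
  then have "- besselJ_dorder (- (- \<nu>)) z - exp (\<i> * of_real (pi * - \<nu> / 2))
        * ((\<i> * of_real (sin (- \<nu> * pi)) + 2 * of_real (cos (- \<nu> * pi))) * besselK (- \<nu>) w
           + of_real (2 / pi * sin (- \<nu> * pi)) * besselK_dorder (- \<nu>) w) = - T"
    unfolding T_def besselK_even besselK_dorder_uminus[OF \<open>0 < Re w\<close>]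
    by (simp add: mult.commute[of _ pi])
  with has_vector_derivative_kelvin[OF assms(1), of "- \<nu>"]
  have "((\<lambda>\<mu>. exp (\<i> * of_real (pi * \<mu>)) * besselJ \<mu> z) has_vector_derivative - T) (at (- \<nu>))"
    unfolding z_def[symmetric] w_def[symmetric] by simp
  from bounded_linear.has_vector_derivative[OF bounded_linear_Re this]
       bounded_linear.has_vector_derivative[OF bounded_linear_Im this]
  show ?thesis
    unfolding ber_def bei_def z_def[symmetric] w_def[symmetric] T_def[symmetric]
      has_real_derivative_iff_has_vector_derivative
    by simp
qed

end
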